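(* Let $\mathsf V$ be a pseudovariety of semigroups. The following are equivalent: (1) $\mathsf V$ is concatenation-closed; (2) for every alphabet $A$ (possibly infinite), if $K,L\subseteq A^+$ are $\mathsf V$-recognizable, then so is $KL$; (3) $\mathsf V\supseteq\mathsf N$ and the multiplication in $\overline{\Omega}_A\mathsf V$ is open for every alphabet $A$; (4) $\mathsf V\supseteq\mathsf N$ and the multiplication in $\overline{\Omega}_A\mathsf V$ is open for every finite alphabet $A$.
   Context: A pseudovariety of semigroups is a class of finite semigroups closed under subsemigroups, homomorphic images and finite direct products; $\mathsf N$ is the pseudovariety of finite nilpotent semigroups. For an alphabet (set) $A$, $A^+$ is the free semigroup and $\overline{\Omega}_A\mathsf V$ the free pro-$\mathsf V$ semigroup over $A$ (a compact semigroup that is an inverse limit of members of $\mathsf V$, with a map from $A$ such that every map from $A$ to a pro-$\mathsf V$ semigroup extends uniquely to a continuous homomorphism). A language $L\subseteq A^+$ is $\mathsf V$-recognizable if $L=\varphi^{-1}(\varphi(L))$ for some homomorphism $\varphi\colon A^+\to F$ with $F\in\mathsf V$. $\mathsf V$ is concatenation-closed if, for every finite alphabet $A$, the $\mathsf V$-recognizable languages over $A$ are closed under concatenation. Multiplication is open if it maps open subsets of $\overline{\Omega}_A\mathsf V\times\overline{\Omega}_A\mathsf V$ to open sets. *)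

theory Defs
  imports "HOL-Analysis.Analysis"
begin

definition sgrp :: "'b set \<Rightarrow> ('b \<Rightarrow> 'b \<Rightarrow> 'b) \<Rightarrow> bool" where
  "sgrp S m \<longleftrightarrow> S \<noteq> {} \<and> (\<forall>x\<in>S. \<forall>y\<in>S. m x y \<in> S) \<and>
     (\<forall>x\<in>S. \<forall>y\<in>S. \<forall>z\<in>S. m (m x y) z = m x (m y z))"

definition finite_sgrp :: "'b set \<Rightarrow> ('b \<Rightarrow> 'b \<Rightarrow> 'b) \<Rightarrow> bool" where
  "finite_sgrp S m \<longleftrightarrow> finite S \<and> sgrp S m"

definition shom :: "'b set \<Rightarrow> ('b \<Rightarrow> 'b \<Rightarrow> 'b) \<Rightarrow> 'c set \<Rightarrow> ('c \<Rightarrow> 'c \<Rightarrow> 'c) \<Rightarrow> ('b \<Rightarrow> 'c) \<Rightarrow> bool" where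
  "shom S m T n h \<longleftrightarrow> (\<forall>x\<in>S. h x \<in> T) \<and> (\<forall>x\<in>S. \<forall>y\<in>S. h (m x y) = n (h x) (h y))"

definition prod_mult :: "('b \<Rightarrow> 'b \<Rightarrow> 'b) \<Rightarrow> ('c \<Rightarrow> 'c \<Rightarrow> 'c) \<Rightarrow> 'b \<times> 'c \<Rightarrow> 'b \<times> 'c \<Rightarrow> 'b \<times> 'c" where
  "prod_mult m n p q = (m (fst p) (fst q), n (snd p) (snd q))"

text \<open>A pseudovariety: a (nonempty) class of finite semigroups, every finite semigroup being
  represented up to isomorphism by one whose carrier is a set of natural numbers; closed under
  subsemigroups, homomorphic images and (binary, hence finite) direct products (up to isomorphism).\<close>

definition pseudovariety :: "(nat set \<times> (nat \<Rightarrow> nat \<Rightarrow> nat)) set \<Rightarrow> bool" where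
  "pseudovariety V \<longleftrightarrow> V \<noteq> {} \<and>
    (\<forall>S m. (S, m) \<in> V \<longrightarrow> finite_sgrp S m) \<and>
    (\<forall>S m T. (S, m) \<in> V \<and> T \<subseteq> S \<and> T \<noteq> {} \<and> (\<forall>x\<in>T. \<forall>y\<in>T. m x y \<in> T) \<longrightarrow> (T, m) \<in> V) \<and>
    (\<forall>S m T n h. (S, m) \<in> V \<and> finite_sgrp T n \<and> shom S m T n h \<and> h ` S = T \<longrightarrow> (T, n) \<in> V) \<and>
    (\<forall>S1 m1 S2 m2 T n h. (S1, m1) \<in> V \<and> (S2, m2) \<in> V \<and> finite_sgrp T n \<and>
        shom (S1 \<times> S2) (prod_mult m1 m2) T n h \<and> bij_betw h (S1 \<times> S2) T \<longrightarrow> (T, n) \<in> V)"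

text \<open>Finite nilpotent semigroups: there are z and n \<ge> 1 with every product of n elements equal to z
  (so z is a zero and S^n = {z}).\<close>

definition nilpotent_sgrp :: "'b set \<Rightarrow> ('b \<Rightarrow> 'b \<Rightarrow> 'b) \<Rightarrow> bool" where
  "nilpotent_sgrp S m \<longleftrightarrow> (\<exists>z\<in>S. \<exists>n::nat. n \<ge> 1 \<and>
     (\<forall>xs. length xs = n \<and> set xs \<subseteq> S \<longrightarrow> foldl m (hd xs) (tl xs) = z))"

definition contains_N :: "(nat set \<times> (nat \<Rightarrow> nat \<Rightarrow> nat)) set \<Rightarrow> bool" where
  "contains_N V \<longleftrightarrow> (\<forall>S m. finite_sgrp S m \<and> nilpotent_sgrp S m \<longrightarrow> (S, m) \<in> V)"

definition Aplus :: "'a set \<Rightarrow> 'a list set" where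
  "Aplus A = {w. w \<noteq> [] \<and> set w \<subseteq> A}"

definition recognizable :: "(nat set \<times> (nat \<Rightarrow> nat \<Rightarrow> nat)) set \<Rightarrow> 'a set \<Rightarrow> 'a list set \<Rightarrow> bool" where
  "recognizable V A L \<longleftrightarrow> L \<subseteq> Aplus A \<and>
     (\<exists>F m \<phi>. (F, m) \<in> V \<and> shom (Aplus A) (@) F m \<phi> \<and> L = {w \<in> Aplus A. \<phi> w \<in> \<phi> ` L})"

definition conc :: "'a list set \<Rightarrow> 'a list set \<Rightarrow> 'a list set" where
  "conc K L = {u @ v | u v. u \<in> K \<and> v \<in> L}"

definition conc_closed_on :: "(nat set \<times> (nat \<Rightarrow> nat \<Rightarrow> nat)) set \<Rightarrow> 'a set \<Rightarrow> bool" where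
  "conc_closed_on V A \<longleftrightarrow>
     (\<forall>K L. recognizable V A K \<and> recognizable V A L \<longrightarrow> recognizable V A (conc K L))"

section \<open>The free pro-V semigroup over A, as the inverse limit of the quotients A^+/\<theta> in V\<close>

text \<open>Congruences \<theta> on A^+ with A^+/\<theta> in V: kernels of surjective homomorphisms onto members of V.\<close>

definition V_congs :: "(nat set \<times> (nat \<Rightarrow> nat \<Rightarrow> nat)) set \<Rightarrow> 'a set \<Rightarrow> 'a list rel set" where
  "V_congs V A = {\<theta>. \<exists>F m \<phi>. (F, m) \<in> V \<and> shom (Aplus A) (@) F m \<phi> \<and> \<phi> ` Aplus A = F \<and>
       \<theta> = {(u, v). u \<in> Aplus A \<and> v \<in> Aplus A \<and> \<phi> u = \<phi> v}}"

text \<open>Elements: compatible families of classes (x \<theta> \<in> A^+/\<theta>, and x \<theta> \<subseteq> x \<theta>' when \<theta> \<subseteq> \<theta>').\<close>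

definition Omega :: "(nat set \<times> (nat \<Rightarrow> nat \<Rightarrow> nat)) set \<Rightarrow> 'a set \<Rightarrow> ('a list rel \<Rightarrow> 'a list set) set" where
  "Omega V A = {x. (\<forall>\<theta>. \<theta> \<notin> V_congs V A \<longrightarrow> x \<theta> = {}) \<and>
      (\<forall>\<theta>\<in>V_congs V A. x \<theta> \<in> Aplus A // \<theta>) \<and>
      (\<forall>\<theta>\<in>V_congs V A. \<forall>\<theta>'\<in>V_congs V A. \<theta> \<subseteq> \<theta>' \<longrightarrow> x \<theta> \<subseteq> x \<theta>')}"

definition Omega_mult :: "(nat set \<times> (nat \<Rightarrow> nat \<Rightarrow> nat)) set \<Rightarrow> 'a set \<Rightarrow>
    ('a list rel \<Rightarrow> 'a list set) \<Rightarrow> ('a list rel \<Rightarrow> 'a list set) \<Rightarrow> ('a list rel \<Rightarrow> 'a list set)" where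
  "Omega_mult V A x y = (\<lambda>\<theta>. if \<theta> \<in> V_congs V A
      then {w. \<exists>u\<in>x \<theta>. \<exists>v\<in>y \<theta>. (u @ v, w) \<in> \<theta>} else {})"

definition Omega_top :: "(nat set \<times> (nat \<Rightarrow> nat \<Rightarrow> nat)) set \<Rightarrow> 'a set \<Rightarrow> ('a list rel \<Rightarrow> 'a list set) topology" where
  "Omega_top V A = subtopology
     (product_topology (\<lambda>\<theta>. if \<theta> \<in> V_congs V A then discrete_topology (Aplus A // \<theta>)
                             else discrete_topology {{}}) UNIV)
     (Omega V A)"

definition mult_open :: "(nat set \<times> (nat \<Rightarrow> nat \<Rightarrow> nat)) set \<Rightarrow> 'a set \<Rightarrow> bool" where
  "mult_open V A \<longleftrightarrow> (\<forall>U. openin (prod_topology (Omega_top V A) (Omega_top V A)) U \<longrightarrow>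
      openin (Omega_top V A) ((\<lambda>(x, y). Omega_mult V A x y) ` U))"

end

theory Submission
  imports Defs
begin

text \<open>
  \<open>Omega V A\<close> is the inverse limit of the finite quotients \<open>A\<^sup>+/\<theta>\<close> by the congruences
  \<open>\<theta> \<in> V_congs V A\<close>; a language is V-recognizable iff it is saturated by such a \<open>\<theta>\<close>, and the
  cylinders \<open>cylinder V A \<theta> K\<close> of points whose \<open>\<theta>\<close>-component lies in \<open>K\<close> are clopen.

  (1) \<open>\<Rightarrow>\<close> (2): two recognizable languages only distinguish finitely many types of letters;
  replacing every letter by a representative of its type reduces \<open>KL\<close> to a product over a finite
  alphabet.
  (1) \<open>\<Rightarrow>\<close> \<open>N \<subseteq> V\<close>: concatenation closure makes every singleton \<open>{w}\<close> recognizable, and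
  a nilpotent semigroup is a quotient of \<open>A\<^sup>+\<close> identifying all long words, hence a quotient of
  \<open>A\<^sup>+/\<theta>\<close> for a \<open>\<theta>\<close> separating the finitely many short words.
  (2) \<open>\<Rightarrow>\<close> (3): the product of the cylinders over \<open>K\<close> and \<open>L\<close> is compact, hence closed, so by
  density of \<open>A\<^sup>+\<close> it is the cylinder over \<open>KL\<close>, which is open once \<open>KL\<close> is recognizable.
  (4) \<open>\<Rightarrow>\<close> (1): conversely that product is compact and open, hence a union of cylinders at a
  single level \<open>\<theta>\<close>; as \<open>N \<subseteq> V\<close> separates every word from all others, a word lies in \<open>KL\<close>
  iff its image lies in the product, so \<open>\<theta>\<close> saturates \<open>KL\<close>.
\<close>

lemma sgrp_foldl_closed:
  assumes "sgrp S m" "a \<in> S" "set xs \<subseteq> S"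
  shows "foldl m a xs \<in> S"
  using assms(2,3)
proof (induction xs arbitrary: a)
  case (Cons x xs)
  then have "m a x \<in> S" using assms(1) unfolding sgrp_def by simp
  then show ?case using Cons by simp
qed simp

lemma sgrp_foldl_assoc:
  assumes sg: "sgrp S m" and "a \<in> S" "b \<in> S" "set xs \<subseteq> S"
  shows "foldl m (m a b) xs = m a (foldl m b xs)"
  using assms(2-4)
proof (induction xs arbitrary: b)
  case (Cons x xs)
  have "m b x \<in> S" and "m (m a b) x = m a (m b x)" using Cons.prems sg unfolding sgrp_def by auto
  then show ?case using Cons by simp
qed simp

lemma shom_foldl:
  assumes "shom S m T n e" "sgrp S m" "a \<in> S" "set xs \<subseteq> S"
  shows "foldl n (e a) (map e xs) = e (foldl m a xs)"
  using assms(3,4)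
proof (induction xs arbitrary: a)
  case (Cons x xs)
  have "m a x \<in> S" and "n (e a) (e x) = e (m a x)"
    using Cons.prems assms(1,2) unfolding sgrp_def shom_def by auto
  then show ?case using Cons by simp
qed simp

lemma shom_comp: "shom S m T n e \<Longrightarrow> shom R l S m f \<Longrightarrow> shom R l T n (e \<circ> f)"
  unfolding shom_def by auto

lemma finite_sgrp_prod:
  "finite_sgrp S1 m1 \<Longrightarrow> finite_sgrp S2 m2 \<Longrightarrow> finite_sgrp (S1 \<times> S2) (prod_mult m1 m2)"
  unfolding finite_sgrp_def sgrp_def prod_mult_def by auto

lemma finite_sgrp_nat_copy:
  fixes S :: "'b set"
  assumes "finite_sgrp S m"
  obtains T :: "nat set" and n e where "finite_sgrp T n" "bij_betw e S T" "shom S m T n e"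
proof -
  from assms have fin: "finite S" and sg: "sgrp S m" unfolding finite_sgrp_def by auto
  obtain e :: "'b \<Rightarrow> nat" where inj: "inj_on e S"
    using finite_imp_inj_to_nat_seg[OF fin] by blast
  define n where "n i j = e (m (inv_into S e i) (inv_into S e j))" for i j
  have hom: "n (e x) (e y) = e (m x y)" if "x \<in> S" "y \<in> S" for x y
    using that inj unfolding n_def by simp
  have closed: "m x y \<in> S" if "x \<in> S" "y \<in> S" for x y
    using that sg unfolding sgrp_def by blast
  have "sgrp (e ` S) n"
    unfolding sgrp_def
  proof (intro conjI ballI)
    show "e ` S \<noteq> {}" using sg unfolding sgrp_def by auto
  next
    fix x y assume "x \<in> e ` S" "y \<in> e ` S"
    then show "n x y \<in> e ` S" using hom closed by auto
  next
    fix x y z assume "x \<in> e ` S" "y \<in> e ` S" "z \<in> e ` S"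
    then obtain a b c where abc: "a \<in> S" "b \<in> S" "c \<in> S" "x = e a" "y = e b" "z = e c" by auto
    then have "n (n x y) z = e (m (m a b) c)" and "n x (n y z) = e (m a (m b c))"
      using hom closed by simp_all
    then show "n (n x y) z = n x (n y z)" using abc sg unfolding sgrp_def by simp
  qed
  then have "finite_sgrp (e ` S) n" using fin unfolding finite_sgrp_def by simp
  moreover have "shom S m (e ` S) n e" unfolding shom_def using hom closed by simp
  ultimately show ?thesis using that inj unfolding bij_betw_def by blast
qed

definition free_ext :: "('b \<Rightarrow> 'b \<Rightarrow> 'b) \<Rightarrow> ('a \<Rightarrow> 'b) \<Rightarrow> 'a list \<Rightarrow> 'b" where
  "free_ext m g w = foldl m (g (hd w)) (map g (tl w))"

lemma shom_free_ext:
  assumes sg: "sgrp S m" and g: "g ` A \<subseteq> S"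
  shows "shom (Aplus A) (@) S m (free_ext m g)"
  unfolding shom_def
proof (intro conjI ballI)
  fix w assume "w \<in> Aplus A"
  then obtain a w' where "w = a # w'" "a \<in> A" "set w' \<subseteq> A" unfolding Aplus_def by (cases w) auto
  then show "free_ext m g w \<in> S"
    unfolding free_ext_def using sgrp_foldl_closed[OF sg, of "g a" "map g w'"] g by auto
next
  fix u v assume "u \<in> Aplus A" "v \<in> Aplus A"
  then obtain a u' b v' where uv: "u = a # u'" "v = b # v'" "a \<in> A" "b \<in> A" "set u' \<subseteq> A" "set v' \<subseteq> A"
    unfolding Aplus_def by (cases u; cases v) auto
  then have "free_ext m g u \<in> S" "g b \<in> S" "set (map g v') \<subseteq> S"
    unfolding free_ext_def using sgrp_foldl_closed[OF sg, of "g a" "map g u'"] g by auto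
  then show "free_ext m g (u @ v) = m (free_ext m g u) (free_ext m g v)"
    using sgrp_foldl_assoc[OF sg] unfolding uv(1,2) by (simp add: free_ext_def)
qed

lemma free_ext_image:
  assumes sg: "sgrp S m" and g: "g ` A = S"
  shows "free_ext m g ` Aplus A = S"
proof
  show "free_ext m g ` Aplus A \<subseteq> S" using shom_free_ext[OF sg, of g A] g unfolding shom_def by auto
  show "S \<subseteq> free_ext m g ` Aplus A"
  proof
    fix s assume "s \<in> S"
    then obtain a where "a \<in> A" "s = g a" using g by blast
    then have "[a] \<in> Aplus A" "s = free_ext m g [a]" unfolding Aplus_def free_ext_def by simp_all
    then show "s \<in> free_ext m g ` Aplus A" by blast
  qed
qed

lemma nilpotent_foldl_long:
  assumes sg: "sgrp S m"
    and zero: "\<And>xs. length xs = k \<Longrightarrow> set xs \<subseteq> S \<Longrightarrow> foldl m (hd xs) (tl xs) = z"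
    and "k \<ge> 1" "length xs \<ge> k" "set xs \<subseteq> S"
  shows "foldl m (hd xs) (tl xs) = z"
proof -
  obtain x ys where xs: "xs = x # ys" using assms(3,4) by (cases xs) auto
  define j where "j = length xs - k"
  define p where "p = foldl m x (take j ys)"
  have "p \<in> S" unfolding p_def
    using sgrp_foldl_closed[OF sg] assms(5) set_take_subset[of j ys] xs by auto
  moreover have "set (drop j ys) \<subseteq> S" using assms(5) set_drop_subset[of j ys] xs by auto
  moreover have "length (p # drop j ys) = k" using assms(3,4) xs unfolding j_def by simp
  ultimately have "foldl m p (drop j ys) = z" using zero[of "p # drop j ys"] by simp
  moreover have "foldl m (hd xs) (tl xs) = foldl m p (drop j ys)"
    unfolding xs p_def by (metis foldl_append append_take_drop_id list.sel(1,3))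
  ultimately show ?thesis by simp
qed

lemma nilpotent_sgrp_image:
  assumes sg: "sgrp S m" and nil: "nilpotent_sgrp S m" and h: "shom S m T n e" and im: "e ` S = T"
  shows "nilpotent_sgrp T n"
proof -
  obtain z k where z: "z \<in> S" "k \<ge> 1"
    "\<And>xs. length xs = k \<Longrightarrow> set xs \<subseteq> S \<Longrightarrow> foldl m (hd xs) (tl xs) = z"
    using nil unfolding nilpotent_sgrp_def by blast
  have "foldl n (hd xs) (tl xs) = e z" if xs: "length xs = k" "set xs \<subseteq> T" for xs
  proof -
    define ys where "ys = map (inv_into S e) xs"
    have ys: "set ys \<subseteq> S" "length ys = k" unfolding ys_def using xs im by (auto intro: inv_into_into)
    have xs_ys: "xs = map e ys"
      unfolding ys_def map_map using xs im by (intro map_idI[symmetric]) (auto simp: f_inv_into_f)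
    obtain y ys' where "ys = y # ys'" using ys(2) z(2) by (cases ys) auto
    then show ?thesis using shom_foldl[OF h sg] z(3)[OF ys(2,1)] ys(1) xs_ys by simp
  qed
  then show ?thesis unfolding nilpotent_sgrp_def using z im by blast
qed

text \<open>The Rees quotient of \<open>A\<^sup>+\<close> by the ideal of words longer than \<open>n\<close>, with \<open>None\<close> as its zero.\<close>

definition trunc_mult :: "nat \<Rightarrow> 'a list option \<Rightarrow> 'a list option \<Rightarrow> 'a list option" where
  "trunc_mult n a b = (case (a, b) of
     (Some u, Some v) \<Rightarrow> if length (u @ v) \<le> n then Some (u @ v) else None
   | _ \<Rightarrow> None)"

definition trunc_sgrp :: "'a set \<Rightarrow> nat \<Rightarrow> 'a list option set" where
  "trunc_sgrp A n = insert None (Some ` {u \<in> Aplus A. length u \<le> n})"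

lemma sgrp_trunc: "sgrp (trunc_sgrp A n) (trunc_mult n)"
  unfolding sgrp_def trunc_sgrp_def trunc_mult_def Aplus_def by (auto split: option.splits)

lemma finite_sgrp_trunc:
  assumes "finite A"
  shows "finite_sgrp (trunc_sgrp A n) (trunc_mult n)"
proof -
  have "finite {u. set u \<subseteq> A \<and> length u \<le> n}" by (rule finite_lists_length_le[OF assms])
  then have "finite {u \<in> Aplus A. length u \<le> n}" by (rule rev_finite_subset) (auto simp: Aplus_def)
  then show ?thesis using sgrp_trunc unfolding finite_sgrp_def trunc_sgrp_def by simp
qed

lemma trunc_foldl_Some:
  assumes "a \<in> trunc_sgrp A n" "set xs \<subseteq> trunc_sgrp A n" "foldl (trunc_mult n) a xs = Some u"
  shows "\<exists>u0. a = Some u0 \<and> length u0 + length xs \<le> length u"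
  using assms
proof (induction xs arbitrary: a)
  case (Cons x xs)
  have "trunc_mult n a x \<in> trunc_sgrp A n" using sgrp_trunc[of A n] Cons.prems(1,2) unfolding sgrp_def by auto
  with Cons obtain u1 where u1: "trunc_mult n a x = Some u1" "length u1 + length xs \<le> length u"
    by auto
  then obtain u0 u2 where "a = Some u0" "x = Some u2" "u1 = u0 @ u2"
    unfolding trunc_mult_def by (auto split: option.splits if_splits)
  moreover have "u2 \<noteq> []" using Cons.prems(2) \<open>x = Some u2\<close> unfolding trunc_sgrp_def Aplus_def by auto
  ultimately show ?case using u1 by (cases u2) auto
qed simp

lemma nilpotent_sgrp_trunc: "nilpotent_sgrp (trunc_sgrp A n) (trunc_mult n)"
  unfolding nilpotent_sgrp_def
proof (intro bexI[of _ None] exI[of _ "Suc n"] conjI allI impI)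
  fix xs assume xs: "length xs = Suc n \<and> set xs \<subseteq> trunc_sgrp A n"
  then obtain y ys where yys: "xs = y # ys" by (cases xs) auto
  show "foldl (trunc_mult n) (hd xs) (tl xs) = None"
  proof (rule ccontr)
    assume "foldl (trunc_mult n) (hd xs) (tl xs) \<noteq> None"
    then obtain u where u: "foldl (trunc_mult n) y ys = Some u" using yys by auto
    have "foldl (trunc_mult n) y ys \<in> trunc_sgrp A n"
      using sgrp_foldl_closed[OF sgrp_trunc[of A n]] xs yys by simp
    then have "length u \<le> n" using u unfolding trunc_sgrp_def by auto
    moreover obtain u0 where "y = Some u0" "length u0 + length ys \<le> length u"
      using trunc_foldl_Some[of y A n ys u] u xs yys by auto
    moreover have "u0 \<noteq> []" using xs yys \<open>y = Some u0\<close> unfolding trunc_sgrp_def Aplus_def by auto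
    ultimately show False using xs yys by (cases u0) auto
  qed
qed (simp_all add: trunc_sgrp_def)

lemma Aplus_append: "u \<in> Aplus A \<Longrightarrow> v \<in> Aplus A \<Longrightarrow> u @ v \<in> Aplus A"
  unfolding Aplus_def by auto

lemma Aplus_empty_iff: "Aplus A = {} \<longleftrightarrow> A = {}"
proof
  assume "Aplus A = {}"
  then have "[a] \<notin> Aplus A" for a by simp
  then show "A = {}" unfolding Aplus_def by auto
qed (simp add: Aplus_def)

lemma conc_subset_Aplus: "K \<subseteq> Aplus A \<Longrightarrow> L \<subseteq> Aplus A \<Longrightarrow> conc K L \<subseteq> Aplus A"
  unfolding conc_def using Aplus_append by blast

lemma conc_one_letter: "Aplus {a} - conc (Aplus {a}) (Aplus {a}) = {[a]}"
proof (intro equalityI subsetI)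
  fix w assume w: "w \<in> Aplus {a} - conc (Aplus {a}) (Aplus {a})"
  then obtain w' where w': "w = a # w'" "set w' \<subseteq> {a}" unfolding Aplus_def by (cases w) auto
  have "w' = []"
  proof (rule ccontr)
    assume "w' \<noteq> []"
    then have "w \<in> conc (Aplus {a}) (Aplus {a})"
      unfolding conc_def Aplus_def using w' by (intro CollectI exI[of _ "[a]"] exI[of _ w']) auto
    then show False using w by simp
  qed
  then show "w \<in> {[a]}" using w' by simp
next
  fix w assume "w \<in> {[a]}"
  moreover have "[a] \<notin> conc (Aplus {a}) (Aplus {a})"
    unfolding conc_def Aplus_def by (auto simp: Cons_eq_append_conv)
  ultimately show "w \<in> Aplus {a} - conc (Aplus {a}) (Aplus {a})" unfolding Aplus_def by auto
qed

lemma conc_vimage_map: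
  assumes \<pi>: "\<And>a. a \<in> A \<Longrightarrow> \<pi> a \<in> B" and K: "K \<subseteq> Aplus A" and L: "L \<subseteq> Aplus A"
    and K\<pi>: "\<And>w. w \<in> Aplus A \<Longrightarrow> map \<pi> w \<in> K \<longleftrightarrow> w \<in> K"
    and L\<pi>: "\<And>w. w \<in> Aplus A \<Longrightarrow> map \<pi> w \<in> L \<longleftrightarrow> w \<in> L"
  shows "{w \<in> Aplus A. map \<pi> w \<in> conc (K \<inter> Aplus B) (L \<inter> Aplus B)} = conc K L"
proof (intro equalityI subsetI)
  fix w assume "w \<in> {w \<in> Aplus A. map \<pi> w \<in> conc (K \<inter> Aplus B) (L \<inter> Aplus B)}"
  then obtain u' v' where w: "w \<in> Aplus A" "map \<pi> w = u' @ v'" "u' \<in> K" "v' \<in> L" "u' \<noteq> []" "v' \<noteq> []"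
    unfolding conc_def Aplus_def by auto
  define u where "u = take (length u') w"
  define v where "v = drop (length u') w"
  have wuv: "w = u @ v" unfolding u_def v_def by simp
  have mu: "map \<pi> u = u'" unfolding u_def using w(2) by (metis append_eq_conv_conj take_map)
  have mv: "map \<pi> v = v'" unfolding v_def using w(2) by (metis append_eq_conv_conj drop_map)
  have "u \<in> Aplus A" "v \<in> Aplus A" using w(1,5,6) mu mv wuv unfolding Aplus_def by auto
  then have "u \<in> K" "v \<in> L" using K\<pi> L\<pi> mu mv w(3,4) by blast+
  then show "w \<in> conc K L" using wuv unfolding conc_def by blast
next
  fix w assume "w \<in> conc K L"
  then obtain u v where uv: "w = u @ v" "u \<in> K" "v \<in> L" unfolding conc_def by blast
  have uvA: "u \<in> Aplus A" "v \<in> Aplus A" using uv K L by auto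
  have "map \<pi> u \<in> Aplus B" "map \<pi> v \<in> Aplus B" using uvA \<pi> unfolding Aplus_def by auto
  then have "map \<pi> w \<in> conc (K \<inter> Aplus B) (L \<inter> Aplus B)"
    using uv uvA K\<pi> L\<pi> unfolding conc_def by auto
  then show "w \<in> {w \<in> Aplus A. map \<pi> w \<in> conc (K \<inter> Aplus B) (L \<inter> Aplus B)}"
    using uv uvA Aplus_append by blast
qed

definition word_kernel :: "'a set \<Rightarrow> ('a list \<Rightarrow> 'c) \<Rightarrow> 'a list rel" where
  "word_kernel A \<phi> = {(u, v). u \<in> Aplus A \<and> v \<in> Aplus A \<and> \<phi> u = \<phi> v}"

lemma shom_map_letters:
  assumes sh: "shom (Aplus A) (@) F m \<phi>" and \<pi>: "\<And>a. a \<in> A \<Longrightarrow> \<pi> a \<in> A" "\<And>a. a \<in> A \<Longrightarrow> \<phi> [\<pi> a] = \<phi> [a]"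
  shows "w \<in> Aplus A \<Longrightarrow> \<phi> (map \<pi> w) = \<phi> w"
proof (induction w)
  case (Cons a w)
  have a: "a \<in> A" "[a] \<in> Aplus A" "[\<pi> a] \<in> Aplus A" using Cons.prems \<pi>(1) unfolding Aplus_def by auto
  show ?case
  proof (cases "w = []")
    case True
    then show ?thesis using \<pi>(2)[OF a(1)] by simp
  next
    case False
    then have w: "w \<in> Aplus A" "map \<pi> w \<in> Aplus A" using Cons.prems \<pi>(1) unfolding Aplus_def by auto
    have "\<phi> (map \<pi> (a # w)) = m (\<phi> [\<pi> a]) (\<phi> (map \<pi> w))"
      using sh a w unfolding shom_def by (metis append_Cons append_Nil list.simps(9))
    also have "\<dots> = m (\<phi> [a]) (\<phi> w)" using \<pi>(2)[OF a(1)] Cons.IH[OF w(1)] by simp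
    also have "\<dots> = \<phi> (a # w)" using sh a w unfolding shom_def by (metis append_Cons append_Nil)
    finally show ?thesis .
  qed
qed (simp add: Aplus_def)

definition saturates :: "'b rel \<Rightarrow> 'b set \<Rightarrow> bool" where
  "saturates \<theta> L \<longleftrightarrow> (\<forall>u v. (u, v) \<in> \<theta> \<longrightarrow> u \<in> L \<longrightarrow> v \<in> L)"

lemma saturates_subset: "saturates \<theta> L \<Longrightarrow> \<theta>' \<subseteq> \<theta> \<Longrightarrow> saturates \<theta>' L"
  unfolding saturates_def by blast

lemma saturates_mem_iff:
  assumes "equiv X \<theta>" "saturates \<theta> L" "(u, v) \<in> \<theta>"
  shows "u \<in> L \<longleftrightarrow> v \<in> L"
  using assms unfolding saturates_def equiv_def sym_def by blast

lemma V_congs_iff: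
  "\<theta> \<in> V_congs V A \<longleftrightarrow>
    (\<exists>F m \<phi>. (F, m) \<in> V \<and> shom (Aplus A) (@) F m \<phi> \<and> \<phi> ` Aplus A = F \<and> \<theta> = word_kernel A \<phi>)"
  unfolding V_congs_def word_kernel_def by simp

lemma V_congsE:
  assumes "\<theta> \<in> V_congs V A"
  obtains F m \<phi> where "(F, m) \<in> V" "shom (Aplus A) (@) F m \<phi>" "\<phi> ` Aplus A = F" "\<theta> = word_kernel A \<phi>"
  using assms unfolding V_congs_iff by blast

lemma V_congs_equiv: "\<theta> \<in> V_congs V A \<Longrightarrow> equiv (Aplus A) \<theta>"
  by (erule V_congsE) (auto simp: word_kernel_def equiv_def refl_on_def sym_def trans_def)

lemma V_congs_subset: "\<theta> \<in> V_congs V A \<Longrightarrow> \<theta> \<subseteq> Aplus A \<times> Aplus A"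
  by (erule V_congsE) (auto simp: word_kernel_def)

lemma V_congs_append:
  assumes "\<theta> \<in> V_congs V A" "(u, u') \<in> \<theta>" "(v, v') \<in> \<theta>"
  shows "(u @ v, u' @ v') \<in> \<theta>"
proof -
  obtain F m \<phi> where 1: "(F, m) \<in> V" "shom (Aplus A) (@) F m \<phi>" "\<theta> = word_kernel A \<phi>"
    using assms(1) by (rule V_congsE) blast
  have uv: "u \<in> Aplus A" "u' \<in> Aplus A" "v \<in> Aplus A" "v' \<in> Aplus A" "\<phi> u = \<phi> u'" "\<phi> v = \<phi> v'"
    using assms(2,3) unfolding 1(3) word_kernel_def by auto
  then have "\<phi> (u @ v) = \<phi> (u' @ v')" using 1(2) unfolding shom_def by simp
  then show ?thesis unfolding 1(3) word_kernel_def using uv by (simp add: Aplus_append)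
qed

lemma recognizable_subset_Aplus: "recognizable V A L \<Longrightarrow> L \<subseteq> Aplus A"
  unfolding recognizable_def by (elim conjE)

lemma recognizable_Diff:
  assumes "recognizable V A L"
  shows "recognizable V A (Aplus A - L)"
proof -
  obtain F m \<phi> where 1: "(F, m) \<in> V" "shom (Aplus A) (@) F m \<phi>" "L = {w \<in> Aplus A. \<phi> w \<in> \<phi> ` L}"
    using assms unfolding recognizable_def by blast
  have L: "w \<in> L \<longleftrightarrow> w \<in> Aplus A \<and> \<phi> w \<in> \<phi> ` L" for w
    using eqset_imp_iff[OF 1(3)] by (simp only: mem_Collect_eq)
  have "Aplus A - L = {w \<in> Aplus A. \<phi> w \<in> \<phi> ` (Aplus A - L)}"
  proof (intro equalityI subsetI)
    fix w assume "w \<in> {w \<in> Aplus A. \<phi> w \<in> \<phi> ` (Aplus A - L)}"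
    then obtain u where "w \<in> Aplus A" "u \<in> Aplus A" "u \<notin> L" "\<phi> u = \<phi> w" by auto
    then show "w \<in> Aplus A - L" using L[of u] by auto
  qed auto
  then show ?thesis unfolding recognizable_def using 1 by blast
qed

lemma recognizable_vimage:
  assumes r: "recognizable V B L" and \<sigma>: "\<And>w. w \<in> Aplus A \<Longrightarrow> \<sigma> w \<in> Aplus B"
    "\<And>u v. u \<in> Aplus A \<Longrightarrow> v \<in> Aplus A \<Longrightarrow> \<sigma> (u @ v) = \<sigma> u @ \<sigma> v"
  shows "recognizable V A {w \<in> Aplus A. \<sigma> w \<in> L}"
proof -
  obtain F m \<phi> where 1: "(F, m) \<in> V" "shom (Aplus B) (@) F m \<phi>" "L = {w \<in> Aplus B. \<phi> w \<in> \<phi> ` L}"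
    using r unfolding recognizable_def by blast
  have "shom (Aplus A) (@) F m (\<phi> \<circ> \<sigma>)" using 1(2) \<sigma> unfolding shom_def by auto
  moreover have "{w \<in> Aplus A. \<sigma> w \<in> L} = {w \<in> Aplus A. (\<phi> \<circ> \<sigma>) w \<in> (\<phi> \<circ> \<sigma>) ` {w \<in> Aplus A. \<sigma> w \<in> L}}"
    using \<sigma>(1) by (subst (1 2) 1(3)) auto
  ultimately show ?thesis unfolding recognizable_def using 1(1) by blast
qed

lemma recognizable_restrict:
  assumes "recognizable V A L" "B \<subseteq> A"
  shows "recognizable V B (L \<inter> Aplus B)"
proof -
  have AB: "Aplus B \<subseteq> Aplus A" using assms(2) unfolding Aplus_def by auto
  have "recognizable V B {w \<in> Aplus B. id w \<in> L}" by (rule recognizable_vimage[OF assms(1)]) (use AB in auto)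
  moreover have "{w \<in> Aplus B. id w \<in> L} = L \<inter> Aplus B" by auto
  ultimately show ?thesis by simp
qed

section \<open>The free pro-V semigroup\<close>

lemma Omega_in_quotient: "x \<in> Omega V A \<Longrightarrow> \<theta> \<in> V_congs V A \<Longrightarrow> x \<theta> \<in> Aplus A // \<theta>"
  unfolding Omega_def by blast

lemma Omega_outside: "x \<in> Omega V A \<Longrightarrow> \<theta> \<notin> V_congs V A \<Longrightarrow> x \<theta> = {}"
  unfolding Omega_def by simp

lemma Omega_mono:
  "x \<in> Omega V A \<Longrightarrow> \<theta> \<in> V_congs V A \<Longrightarrow> \<theta>' \<in> V_congs V A \<Longrightarrow> \<theta> \<subseteq> \<theta>' \<Longrightarrow> x \<theta> \<subseteq> x \<theta>'"
  unfolding Omega_def by blast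

lemma Omega_nonempty: "x \<in> Omega V A \<Longrightarrow> \<theta> \<in> V_congs V A \<Longrightarrow> x \<theta> \<noteq> {}"
  by (rule in_quotient_imp_non_empty[OF V_congs_equiv Omega_in_quotient])

lemma Omega_subset_Aplus: "x \<in> Omega V A \<Longrightarrow> \<theta> \<in> V_congs V A \<Longrightarrow> x \<theta> \<subseteq> Aplus A"
  by (rule in_quotient_imp_subset[OF V_congs_equiv Omega_in_quotient])

lemma Omega_eq_Image:
  assumes x: "x \<in> Omega V A" and t: "\<theta> \<in> V_congs V A" and u: "u \<in> x \<theta>"
  shows "x \<theta> = \<theta> `` {u}"
proof -
  obtain w where w: "x \<theta> = \<theta> `` {w}" using Omega_in_quotient[OF x t] by (rule quotientE)
  then have "(w, u) \<in> \<theta>" using u by simp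
  then show ?thesis using w V_congs_equiv[OF t] by (simp add: equiv_class_eq)
qed

lemma Omega_eq_Image_coarser:
  assumes x: "x \<in> Omega V A" and t: "\<theta> \<in> V_congs V A" "\<theta>' \<in> V_congs V A" "\<theta> \<subseteq> \<theta>'"
    and u: "u \<in> x \<theta>"
  shows "x \<theta>' = \<theta>' `` {u}"
  using Omega_eq_Image[OF x t(2)] Omega_mono[OF x t] u by blast

lemma Omega_eq_coarser:
  assumes x: "x \<in> Omega V A" and z: "z \<in> Omega V A"
    and t: "\<theta> \<in> V_congs V A" "\<theta>' \<in> V_congs V A" "\<theta> \<subseteq> \<theta>'" and eq: "x \<theta> = z \<theta>"
  shows "x \<theta>' = z \<theta>'"
proof -
  obtain u where u: "u \<in> x \<theta>" using Omega_nonempty[OF x t(1)] by blast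
  then have "u \<in> z \<theta>" using eq by simp
  then show ?thesis using Omega_eq_Image_coarser[OF x t u] Omega_eq_Image_coarser[OF z t] by simp
qed

lemma saturates_Omega_class: "x \<in> Omega V A \<Longrightarrow> \<theta> \<in> V_congs V A \<Longrightarrow> saturates \<theta> (x \<theta>)"
  using Omega_eq_Image unfolding saturates_def by fastforce

definition Omega_word :: "(nat set \<times> (nat \<Rightarrow> nat \<Rightarrow> nat)) set \<Rightarrow> 'a set \<Rightarrow> 'a list \<Rightarrow> 'a list rel \<Rightarrow> 'a list set" where
  "Omega_word V A w = (\<lambda>\<theta>. if \<theta> \<in> V_congs V A then \<theta> `` {w} else {})"

lemma Omega_word_apply: "\<theta> \<in> V_congs V A \<Longrightarrow> Omega_word V A w \<theta> = \<theta> `` {w}"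
  unfolding Omega_word_def by simp

lemma Omega_word_self: "\<theta> \<in> V_congs V A \<Longrightarrow> w \<in> Aplus A \<Longrightarrow> w \<in> Omega_word V A w \<theta>"
  unfolding Omega_word_apply by (rule equiv_class_self[OF V_congs_equiv])

lemma Omega_word_in_Omega: "w \<in> Aplus A \<Longrightarrow> Omega_word V A w \<in> Omega V A"
  unfolding Omega_def Omega_word_def by (auto intro: quotientI)

lemma Omega_mult_apply:
  assumes x: "x \<in> Omega V A" and y: "y \<in> Omega V A" and t: "\<theta> \<in> V_congs V A"
    and u: "u \<in> x \<theta>" and v: "v \<in> y \<theta>"
  shows "Omega_mult V A x y \<theta> = \<theta> `` {u @ v}"
proof -
  have eq: "\<theta> `` {u' @ v'} = \<theta> `` {u @ v}" if "u' \<in> x \<theta>" "v' \<in> y \<theta>" for u' v'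
  proof -
    have "(u', u) \<in> \<theta>" "(v', v) \<in> \<theta>"
      using that Omega_eq_Image[OF x t u] Omega_eq_Image[OF y t v] V_congs_equiv[OF t]
      unfolding equiv_def sym_def by blast+
    then show ?thesis using V_congs_append[OF t] V_congs_equiv[OF t] by (simp add: equiv_class_eq)
  qed
  show ?thesis
  proof (rule set_eqI)
    fix w
    have "w \<in> Omega_mult V A x y \<theta> \<longleftrightarrow> (\<exists>u'\<in>x \<theta>. \<exists>v'\<in>y \<theta>. w \<in> \<theta> `` {u' @ v'})"
      unfolding Omega_mult_def using t by simp
    also have "\<dots> \<longleftrightarrow> w \<in> \<theta> `` {u @ v}" using eq u v by blast
    finally show "w \<in> Omega_mult V A x y \<theta> \<longleftrightarrow> w \<in> \<theta> `` {u @ v}" .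
  qed
qed

lemma Omega_mult_in_Omega:
  assumes x: "x \<in> Omega V A" and y: "y \<in> Omega V A"
  shows "Omega_mult V A x y \<in> Omega V A"
  unfolding Omega_def
proof (intro CollectI conjI allI impI ballI)
  fix \<theta> assume "\<theta> \<notin> V_congs V A"
  then show "Omega_mult V A x y \<theta> = {}" unfolding Omega_mult_def by simp
next
  fix \<theta> assume t: "\<theta> \<in> V_congs V A"
  obtain u v where uv: "u \<in> x \<theta>" "v \<in> y \<theta>" using Omega_nonempty[OF x t] Omega_nonempty[OF y t] by blast
  have "u @ v \<in> Aplus A" using uv Omega_subset_Aplus[OF x t] Omega_subset_Aplus[OF y t] Aplus_append by blast
  then show "Omega_mult V A x y \<theta> \<in> Aplus A // \<theta>"
    unfolding Omega_mult_apply[OF x y t uv] by (rule quotientI)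
next
  fix \<theta> \<theta>' assume t: "\<theta> \<in> V_congs V A" "\<theta>' \<in> V_congs V A" "\<theta> \<subseteq> \<theta>'"
  obtain u v where uv: "u \<in> x \<theta>" "v \<in> y \<theta>" using Omega_nonempty[OF x t(1)] Omega_nonempty[OF y t(1)] by blast
  then have "u \<in> x \<theta>'" "v \<in> y \<theta>'" using Omega_mono[OF x t] Omega_mono[OF y t] by blast+
  then show "Omega_mult V A x y \<theta> \<subseteq> Omega_mult V A x y \<theta>'"
    using Omega_mult_apply[OF x y t(1) uv] Omega_mult_apply[OF x y t(2)] t(3) by auto
qed

lemma Omega_mult_cong:
  assumes "x \<in> Omega V A" "y \<in> Omega V A" "x' \<in> Omega V A" "y' \<in> Omega V A" "\<theta> \<in> V_congs V A"
    and "x' \<theta> = x \<theta>" "y' \<theta> = y \<theta>"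
  shows "Omega_mult V A x' y' \<theta> = Omega_mult V A x y \<theta>"
proof -
  obtain u v where uv: "u \<in> x \<theta>" "v \<in> y \<theta>" using Omega_nonempty assms(1,2,5) by blast
  then have "u \<in> x' \<theta>" "v \<in> y' \<theta>" using assms(6,7) by simp_all
  then show ?thesis using Omega_mult_apply[OF assms(3,4,5)] Omega_mult_apply[OF assms(1,2,5) uv] by simp
qed

lemma Omega_mult_Omega_word:
  assumes "u \<in> Aplus A" "v \<in> Aplus A"
  shows "Omega_mult V A (Omega_word V A u) (Omega_word V A v) = Omega_word V A (u @ v)"
proof
  fix \<theta>
  show "Omega_mult V A (Omega_word V A u) (Omega_word V A v) \<theta> = Omega_word V A (u @ v) \<theta>"
  proof (cases "\<theta> \<in> V_congs V A")
    case True
    then show ?thesis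
      using Omega_mult_apply[OF Omega_word_in_Omega Omega_word_in_Omega True
          Omega_word_self[OF True] Omega_word_self[OF True]] assms
      by (simp add: Omega_word_apply)
  qed (simp add: Omega_mult_def Omega_word_def)
qed

text \<open>The cylinders \<open>cylinder V A \<theta> (z \<theta>)\<close>, \<open>\<theta> \<in> V_congs V A\<close>, form a basis of clopen
  neighbourhoods of \<open>z\<close>.\<close>

definition cylinder :: "(nat set \<times> (nat \<Rightarrow> nat \<Rightarrow> nat)) set \<Rightarrow> 'a set \<Rightarrow> 'a list rel \<Rightarrow> 'a list set \<Rightarrow>
    ('a list rel \<Rightarrow> 'a list set) set" where
  "cylinder V A \<theta> K = {x \<in> Omega V A. x \<theta> \<subseteq> K}"

lemma cylinder_class_iff:
  assumes "x \<in> Omega V A" "z \<in> Omega V A" "\<theta> \<in> V_congs V A"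
  shows "x \<in> cylinder V A \<theta> (z \<theta>) \<longleftrightarrow> x \<theta> = z \<theta>"
proof -
  obtain u where "u \<in> x \<theta>" using Omega_nonempty[OF assms(1,3)] by blast
  then show ?thesis
    using Omega_eq_Image[OF assms(1,3)] Omega_eq_Image[OF assms(2,3)] assms(1)
    unfolding cylinder_def by auto
qed

lemma cylinder_class_mono:
  assumes "z \<in> Omega V A" "\<theta> \<in> V_congs V A" "\<theta>' \<in> V_congs V A" "\<theta> \<subseteq> \<theta>'"
  shows "cylinder V A \<theta> (z \<theta>) \<subseteq> cylinder V A \<theta>' (z \<theta>')"
  using Omega_eq_coarser[OF _ assms(1-4)] cylinder_class_iff assms unfolding cylinder_def by blast

lemma Omega_word_in_cylinder:
  assumes "\<theta> \<in> V_congs V A" "saturates \<theta> K" "w \<in> K" "w \<in> Aplus A"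
  shows "Omega_word V A w \<in> cylinder V A \<theta> K"
proof -
  have "Omega_word V A w \<theta> \<subseteq> K"
    using assms(2,3) unfolding Omega_word_apply[OF assms(1)] saturates_def by blast
  then show ?thesis unfolding cylinder_def using Omega_word_in_Omega[OF assms(4)] by simp
qed

lemma Omega_mult_cylinders_apply:
  assumes x: "x \<in> cylinder V A \<theta> K" and y: "y \<in> cylinder V A \<theta> L"
    and t: "\<theta> \<in> V_congs V A" "\<theta>' \<in> V_congs V A" "\<theta>' \<subseteq> \<theta>"
  obtains u v where "u \<in> K" "v \<in> L" "Omega_mult V A x y \<theta>' = \<theta>' `` {u @ v}"
proof -
  have xO: "x \<in> Omega V A" and yO: "y \<in> Omega V A" using x y unfolding cylinder_def by auto
  obtain u v where uv: "u \<in> x \<theta>'" "v \<in> y \<theta>'" using Omega_nonempty xO yO t(2) by blast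
  then have "u \<in> K" "v \<in> L" using Omega_mono[OF xO t(2,1,3)] Omega_mono[OF yO t(2,1,3)] x y
    unfolding cylinder_def by auto
  then show ?thesis using that Omega_mult_apply[OF xO yO t(2) uv] by blast
qed

lemma Omega_word_append_in_mult_image:
  assumes "\<theta> \<in> V_congs V A" "saturates \<theta> K" "saturates \<theta> L" "u \<in> K" "v \<in> L" "u \<in> Aplus A" "v \<in> Aplus A"
  shows "Omega_word V A (u @ v) \<in> (\<lambda>(x, y). Omega_mult V A x y) ` (cylinder V A \<theta> K \<times> cylinder V A \<theta> L)"
proof -
  have "(Omega_word V A u, Omega_word V A v) \<in> cylinder V A \<theta> K \<times> cylinder V A \<theta> L"
    using Omega_word_in_cylinder assms by blast
  then show ?thesis by (rule rev_image_eqI) (simp add: Omega_mult_Omega_word[OF assms(6,7)])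
qed

lemma Omega_mult_image_class_cylinders_subset:
  assumes x: "x \<in> Omega V A" and y: "y \<in> Omega V A" and t: "\<theta> \<in> V_congs V A"
  shows "(\<lambda>(x, y). Omega_mult V A x y) ` (cylinder V A \<theta> (x \<theta>) \<times> cylinder V A \<theta> (y \<theta>)) \<subseteq>
    cylinder V A \<theta> (Omega_mult V A x y \<theta>)"
proof clarify
  fix x' y' assume x': "x' \<in> cylinder V A \<theta> (x \<theta>)" and y': "y' \<in> cylinder V A \<theta> (y \<theta>)"
  then have O: "x' \<in> Omega V A" "y' \<in> Omega V A" unfolding cylinder_def by auto
  then have "x' \<theta> = x \<theta>" "y' \<theta> = y \<theta>"
    using cylinder_class_iff[OF O(1) x t] cylinder_class_iff[OF O(2) y t] x' y' by simp_all
  then show "Omega_mult V A x' y' \<in> cylinder V A \<theta> (Omega_mult V A x y \<theta>)"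
    using Omega_mult_cong[OF x y O t] Omega_mult_in_Omega[OF O] unfolding cylinder_def by simp
qed

lemma saturates_of_Omega_word_preimage:
  assumes t: "\<theta> \<in> V_congs V A" and P: "\<And>z. z \<in> P \<Longrightarrow> cylinder V A \<theta> (z \<theta>) \<subseteq> P"
    and M: "\<And>w. w \<in> Aplus A \<Longrightarrow> Omega_word V A w \<in> P \<longleftrightarrow> w \<in> M"
  shows "saturates \<theta> M"
  unfolding saturates_def
proof (intro allI impI)
  fix w w' assume ww': "(w, w') \<in> \<theta>" "w \<in> M"
  have wA: "w \<in> Aplus A" "w' \<in> Aplus A" using V_congs_subset[OF t] ww'(1) by auto
  have "Omega_word V A w' \<theta> = Omega_word V A w \<theta>"
    using equiv_class_eq[OF V_congs_equiv[OF t] ww'(1)] by (simp add: Omega_word_apply[OF t])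
  then have "Omega_word V A w' \<in> cylinder V A \<theta> (Omega_word V A w \<theta>)"
    using cylinder_class_iff[OF Omega_word_in_Omega Omega_word_in_Omega t] wA by blast
  moreover have "Omega_word V A w \<in> P" using M[OF wA(1)] ww'(2) by simp
  ultimately have "Omega_word V A w' \<in> P" using P by blast
  then show "w' \<in> M" using M[OF wA(2)] by simp
qed

definition Omega_factor :: "(nat set \<times> (nat \<Rightarrow> nat \<Rightarrow> nat)) set \<Rightarrow> 'a set \<Rightarrow> 'a list rel \<Rightarrow> 'a list set topology" where
  "Omega_factor V A \<theta> = discrete_topology (if \<theta> \<in> V_congs V A then Aplus A // \<theta> else {{}})"

lemma Omega_top_eq: "Omega_top V A = subtopology (product_topology (Omega_factor V A) UNIV) (Omega V A)"
proof -
  have "(\<lambda>\<theta>. if \<theta> \<in> V_congs V A then discrete_topology (Aplus A // \<theta>) else discrete_topology {{}}) =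
      Omega_factor V A"
    unfolding Omega_factor_def by (auto simp: fun_eq_iff)
  then show ?thesis unfolding Omega_top_def by simp
qed

lemma Omega_subset_topspace: "Omega V A \<subseteq> topspace (product_topology (Omega_factor V A) UNIV)"
  unfolding Omega_def Omega_factor_def by (auto simp: PiE_iff)

lemma topspace_Omega_top [simp]: "topspace (Omega_top V A) = Omega V A"
  unfolding Omega_top_eq using Omega_subset_topspace by auto

lemma continuous_map_Omega_apply:
  assumes "\<theta> \<in> V_congs V A"
  shows "continuous_map (Omega_top V A) (discrete_topology (Aplus A // \<theta>)) (\<lambda>x. x \<theta>)"
proof -
  have "continuous_map (product_topology (Omega_factor V A) UNIV) (Omega_factor V A \<theta>) (\<lambda>x. x \<theta>)"
    by (rule continuous_map_product_projection) simp
  then show ?thesis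
    unfolding Omega_top_eq using assms by (simp add: continuous_map_from_subtopology Omega_factor_def)
qed

lemma
  assumes "\<theta> \<in> V_congs V A"
  shows openin_cylinder: "openin (Omega_top V A) (cylinder V A \<theta> K)"
    and closedin_cylinder: "closedin (Omega_top V A) (cylinder V A \<theta> K)"
proof -
  have eq: "cylinder V A \<theta> K = {x \<in> topspace (Omega_top V A). x \<theta> \<in> Pow K \<inter> (Aplus A // \<theta>)}"
    using Omega_in_quotient[OF _ assms] unfolding cylinder_def by auto
  show "openin (Omega_top V A) (cylinder V A \<theta> K)" unfolding eq
    by (rule openin_continuous_map_preimage[OF continuous_map_Omega_apply[OF assms]]) simp
  show "closedin (Omega_top V A) (cylinder V A \<theta> K)" unfolding eq
    by (rule closedin_continuous_map_preimage[OF continuous_map_Omega_apply[OF assms]]) simp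
qed

lemma notin_OmegaE:
  assumes x: "x \<in> topspace (product_topology (Omega_factor V A) UNIV)" and "x \<notin> Omega V A"
  obtains \<theta> \<theta>' where "\<theta> \<in> V_congs V A" "\<theta>' \<in> V_congs V A" "\<theta> \<subseteq> \<theta>'" "\<not> x \<theta> \<subseteq> x \<theta>'"
proof (rule ccontr)
  assume nt: "\<not> thesis"
  have xt: "x \<theta> \<in> topspace (Omega_factor V A \<theta>)" for \<theta> using x by auto
  have "x \<in> Omega V A"
    unfolding Omega_def
  proof (intro CollectI conjI allI impI ballI)
    fix \<theta> assume "\<theta> \<notin> V_congs V A"
    then show "x \<theta> = {}" using xt[of \<theta>] unfolding Omega_factor_def by simp
  next
    fix \<theta> assume "\<theta> \<in> V_congs V A"
    then show "x \<theta> \<in> Aplus A // \<theta>" using xt[of \<theta>] unfolding Omega_factor_def by simp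
  next
    fix \<theta> \<theta>' assume "\<theta> \<in> V_congs V A" "\<theta>' \<in> V_congs V A" "\<theta> \<subseteq> \<theta>'"
    then show "x \<theta> \<subseteq> x \<theta>'" using nt that by blast
  qed
  then show False using assms(2) by simp
qed

lemma closedin_Omega: "closedin (product_topology (Omega_factor V A) UNIV) (Omega V A)"
proof -
  let ?P = "product_topology (Omega_factor V A) UNIV"
  have "openin ?P (topspace ?P - Omega V A)"
  proof (subst openin_subopen, intro ballI)
    fix x assume x: "x \<in> topspace ?P - Omega V A"
    then have xt: "x \<in> topspace ?P" "x \<notin> Omega V A" by auto
    then have x\<theta>: "x \<theta> \<in> topspace (Omega_factor V A \<theta>)" for \<theta> by auto
    from xt obtain \<theta> \<theta>' where tt: "\<theta> \<in> V_congs V A" "\<theta>' \<in> V_congs V A" "\<theta> \<subseteq> \<theta>'" "\<not> x \<theta> \<subseteq> x \<theta>'"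
      by (rule notin_OmegaE)
    define T where "T = {y \<in> topspace ?P. y \<theta> \<in> {x \<theta>}} \<inter> {y \<in> topspace ?P. y \<theta>' \<in> {x \<theta>'}}"
    have "openin ?P T" unfolding T_def
      by (intro openin_Int openin_continuous_map_preimage[OF continuous_map_product_projection])
        (use x\<theta> in \<open>auto simp: Omega_factor_def\<close>)
    moreover have "x \<in> T" using xt(1) unfolding T_def by auto
    moreover have "T \<subseteq> topspace ?P - Omega V A" using tt Omega_mono unfolding T_def by blast
    ultimately show "\<exists>T. openin ?P T \<and> x \<in> T \<and> T \<subseteq> topspace ?P - Omega V A" by blast
  qed
  then show ?thesis unfolding closedin_def using Omega_subset_topspace by blast
qed

lemma Hausdorff_space_Omega_top: "Hausdorff_space (Omega_top V A)"
  unfolding Omega_top_eq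
  by (intro Hausdorff_space_subtopology) (simp add: Hausdorff_space_product_topology Omega_factor_def)

locale semigroup_pseudovariety =
  fixes V :: "(nat set \<times> (nat \<Rightarrow> nat \<Rightarrow> nat)) set"
  assumes pseudovariety: "pseudovariety V"
begin

lemma V_finite_sgrp: "(S, m) \<in> V \<Longrightarrow> finite_sgrp S m"
  using pseudovariety unfolding pseudovariety_def by blast

lemma V_subsgrp: "(S, m) \<in> V \<Longrightarrow> T \<subseteq> S \<Longrightarrow> T \<noteq> {} \<Longrightarrow> (\<forall>x\<in>T. \<forall>y\<in>T. m x y \<in> T) \<Longrightarrow> (T, m) \<in> V"
  using pseudovariety unfolding pseudovariety_def by (elim conjE) metis

lemma V_hom_image: "(S, m) \<in> V \<Longrightarrow> finite_sgrp T n \<Longrightarrow> shom S m T n h \<Longrightarrow> h ` S = T \<Longrightarrow> (T, n) \<in> V"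
  using pseudovariety unfolding pseudovariety_def by (elim conjE) metis

lemma V_prod:
  assumes "(S1, m1) \<in> V" "(S2, m2) \<in> V" "finite_sgrp T n" "shom (S1 \<times> S2) (prod_mult m1 m2) T n h"
    "bij_betw h (S1 \<times> S2) T"
  shows "(T, n) \<in> V"
  using pseudovariety assms unfolding pseudovariety_def by (elim conjE) metis

lemma trivial_sgrp_in_V: "({0}, \<lambda>_ _. 0) \<in> V"
proof -
  obtain S m where Sm: "(S, m) \<in> V"
    using pseudovariety unfolding pseudovariety_def by (elim conjE) fast
  then have "S \<noteq> {}" using V_finite_sgrp unfolding finite_sgrp_def sgrp_def by blast
  then have "(\<lambda>_. 0) ` S = {0}" by auto
  moreover have "finite_sgrp {0} (\<lambda>_ _. 0)" unfolding finite_sgrp_def sgrp_def by simp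
  moreover have "shom S m {0} (\<lambda>_ _. 0) (\<lambda>_. 0)" unfolding shom_def by simp
  ultimately show ?thesis by (intro V_hom_image[OF Sm]) simp_all
qed

lemma word_kernel_in_V_congs:
  assumes A: "A \<noteq> {}" and F: "(F, m) \<in> V" and h: "shom (Aplus A) (@) F m \<phi>"
  shows "word_kernel A \<phi> \<in> V_congs V A"
proof -
  have "(\<phi> ` Aplus A, m) \<in> V"
  proof (rule V_subsgrp[OF F])
    show "\<phi> ` Aplus A \<subseteq> F" "\<phi> ` Aplus A \<noteq> {}" using h A unfolding shom_def by (auto simp: Aplus_empty_iff)
    show "\<forall>x\<in>\<phi> ` Aplus A. \<forall>y\<in>\<phi> ` Aplus A. m x y \<in> \<phi> ` Aplus A"
    proof (intro ballI)
      fix x y assume "x \<in> \<phi> ` Aplus A" "y \<in> \<phi> ` Aplus A"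
      then obtain u v where "u \<in> Aplus A" "v \<in> Aplus A" "x = \<phi> u" "y = \<phi> v" by blast
      then show "m x y \<in> \<phi> ` Aplus A" using h Aplus_append unfolding shom_def by (metis image_eqI)
    qed
  qed
  moreover have "shom (Aplus A) (@) (\<phi> ` Aplus A) m \<phi>" using h unfolding shom_def by auto
  ultimately show ?thesis unfolding V_congs_iff by blast
qed

text \<open>Members of \<open>V\<close> are carried by sets of naturals; this lemma admits semigroups on other
  carriers (products, Rees quotients) up to an embedding.\<close>

lemma word_kernel_in_V_congs_embedding:
  assumes A: "A \<noteq> {}" and T: "(T, n) \<in> V" and e: "shom S m T n e" "inj_on e S"
    and h: "shom (Aplus A) (@) S m \<phi>"
  shows "word_kernel A \<phi> \<in> V_congs V A"
proof -
  have "word_kernel A (e \<circ> \<phi>) = word_kernel A \<phi>"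
    using e(2) h unfolding word_kernel_def shom_def inj_on_def by auto
  then show ?thesis using word_kernel_in_V_congs[OF A T shom_comp[OF e(1) h]] by simp
qed

lemma V_congs_nonempty_alphabet:
  assumes "\<theta> \<in> V_congs V A"
  shows "A \<noteq> {}"
proof -
  obtain F m \<phi> where "(F, m) \<in> V" "\<phi> ` Aplus A = F"
    using assms by (rule V_congsE) blast
  then have "Aplus A \<noteq> {}" using V_finite_sgrp unfolding finite_sgrp_def sgrp_def by blast
  then show ?thesis unfolding Aplus_empty_iff .
qed

lemma Aplus_Times_in_V_congs:
  assumes "A \<noteq> {}"
  shows "Aplus A \<times> Aplus A \<in> V_congs V A"
proof -
  have "word_kernel A (\<lambda>_. 0::nat) \<in> V_congs V A"
    using word_kernel_in_V_congs[OF assms trivial_sgrp_in_V] unfolding shom_def by simp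
  then show ?thesis unfolding word_kernel_def by simp
qed

lemma V_congs_Int:
  assumes t1: "\<theta>1 \<in> V_congs V A" and t2: "\<theta>2 \<in> V_congs V A"
  shows "\<theta>1 \<inter> \<theta>2 \<in> V_congs V A"
proof -
  obtain F1 m1 \<phi>1 where 1: "(F1, m1) \<in> V" "shom (Aplus A) (@) F1 m1 \<phi>1" "\<theta>1 = word_kernel A \<phi>1"
    using t1 by (rule V_congsE) blast
  obtain F2 m2 \<phi>2 where 2: "(F2, m2) \<in> V" "shom (Aplus A) (@) F2 m2 \<phi>2" "\<theta>2 = word_kernel A \<phi>2"
    using t2 by (rule V_congsE) blast
  obtain T :: "nat set" and n e where T: "finite_sgrp T n" "bij_betw e (F1 \<times> F2) T"
    "shom (F1 \<times> F2) (prod_mult m1 m2) T n e"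
    using finite_sgrp_nat_copy[OF finite_sgrp_prod[OF V_finite_sgrp[OF 1(1)] V_finite_sgrp[OF 2(1)]]] .
  have "shom (Aplus A) (@) (F1 \<times> F2) (prod_mult m1 m2) (\<lambda>w. (\<phi>1 w, \<phi>2 w))"
    using 1(2) 2(2) unfolding shom_def prod_mult_def by simp
  then have "word_kernel A (\<lambda>w. (\<phi>1 w, \<phi>2 w)) \<in> V_congs V A"
    by (rule word_kernel_in_V_congs_embedding[OF V_congs_nonempty_alphabet[OF t1]
          V_prod[OF 1(1) 2(1) T(1,3,2)] T(3) bij_betw_imp_inj_on[OF T(2)]])
  moreover have "word_kernel A (\<lambda>w. (\<phi>1 w, \<phi>2 w)) = \<theta>1 \<inter> \<theta>2"
    unfolding 1(3) 2(3) word_kernel_def by auto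
  ultimately show ?thesis by simp
qed

lemma V_congs_Int_Inter:
  assumes "\<theta> \<in> V_congs V A" "finite \<Theta>" "\<Theta> \<subseteq> V_congs V A"
  shows "\<theta> \<inter> \<Inter>\<Theta> \<in> V_congs V A"
  using assms(2,3)
proof (induction \<Theta> rule: finite_induct)
  case (insert \<theta>' \<Theta>)
  then have "\<theta> \<inter> \<Inter>\<Theta> \<in> V_congs V A" "\<theta>' \<in> V_congs V A" by simp_all
  then have "(\<theta> \<inter> \<Inter>\<Theta>) \<inter> \<theta>' \<in> V_congs V A" by (rule V_congs_Int)
  then show ?case by (simp add: Int_ac)
qed (simp add: assms(1))

lemma V_congs_saturating_finite:
  assumes A: "A \<noteq> {}" and W: "finite W" and sep: "\<And>w. w \<in> W \<Longrightarrow> \<exists>\<theta>\<in>V_congs V A. saturates \<theta> {w}"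
  shows "\<exists>\<theta>\<in>V_congs V A. \<forall>w\<in>W. saturates \<theta> {w}"
proof -
  obtain sc where sc: "\<And>w. w \<in> W \<Longrightarrow> sc w \<in> V_congs V A \<and> saturates (sc w) {w}" using sep by metis
  define \<theta> where "\<theta> = (Aplus A \<times> Aplus A) \<inter> \<Inter>(sc ` W)"
  have "\<theta> \<in> V_congs V A" unfolding \<theta>_def
    using W sc by (intro V_congs_Int_Inter Aplus_Times_in_V_congs[OF A]) auto
  moreover have "saturates \<theta> {w}" if "w \<in> W" for w
    using saturates_subset[of "sc w" "{w}" \<theta>] sc[OF that] that unfolding \<theta>_def by blast
  ultimately show ?thesis by blast
qed

lemma finite_quotient_V_congs:
  assumes "\<theta> \<in> V_congs V A"
  shows "finite (Aplus A // \<theta>)"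
proof -
  obtain F m \<phi> where 1: "(F, m) \<in> V" "\<phi> ` Aplus A = F" "\<theta> = word_kernel A \<phi>"
    using assms by (rule V_congsE) blast
  have "\<theta> `` {u} = {w \<in> Aplus A. \<phi> w = \<phi> u}" if "u \<in> Aplus A" for u
    using that unfolding 1(3) word_kernel_def by auto
  then have "Aplus A // \<theta> = (\<lambda>f. {w \<in> Aplus A. \<phi> w = f}) ` F"
    unfolding quotient_def 1(2)[symmetric] by (simp add: image_image UNION_singleton_eq_range)
  then show ?thesis using V_finite_sgrp[OF 1(1)] unfolding finite_sgrp_def by simp
qed

lemma V_congs_hom_image_in_V:
  assumes t: "\<theta> \<in> V_congs V A" and S: "finite_sgrp S m"
    and h: "shom (Aplus A) (@) S m \<psi>" "\<psi> ` Aplus A = S" and k: "\<And>u v. (u, v) \<in> \<theta> \<Longrightarrow> \<psi> u = \<psi> v"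
  shows "(S, m) \<in> V"
proof -
  obtain F mF \<phi> where 1: "(F, mF) \<in> V" "shom (Aplus A) (@) F mF \<phi>" "\<phi> ` Aplus A = F"
    "\<theta> = word_kernel A \<phi>"
    using t by (rule V_congsE)
  define g where "g f = \<psi> (SOME u. u \<in> Aplus A \<and> \<phi> u = f)" for f
  have g: "g (\<phi> u) = \<psi> u" if u: "u \<in> Aplus A" for u
  proof -
    define u' where "u' = (SOME u'. u' \<in> Aplus A \<and> \<phi> u' = \<phi> u)"
    have "u' \<in> Aplus A \<and> \<phi> u' = \<phi> u" unfolding u'_def by (rule someI_ex) (use u in blast)
    then have "(u', u) \<in> \<theta>" using u unfolding 1(4) word_kernel_def by simp
    then show ?thesis unfolding g_def u'_def[symmetric] by (rule k)
  qed
  have hom: "g (mF (\<phi> u) (\<phi> v)) = m (g (\<phi> u)) (g (\<phi> v))" if "u \<in> Aplus A" "v \<in> Aplus A" for u v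
  proof -
    have "mF (\<phi> u) (\<phi> v) = \<phi> (u @ v)" using 1(2) that unfolding shom_def by simp
    moreover have "g (\<phi> (u @ v)) = \<psi> (u @ v)" using that by (simp add: g Aplus_append)
    ultimately show ?thesis using h(1) that unfolding shom_def by (simp add: g)
  qed
  have "shom F mF S m g"
    unfolding shom_def
  proof (intro conjI ballI)
    fix x assume "x \<in> F"
    then obtain u where "u \<in> Aplus A" "x = \<phi> u" using 1(3) by blast
    then show "g x \<in> S" using h unfolding shom_def by (simp add: g)
  next
    fix x y assume "x \<in> F" "y \<in> F"
    then obtain u v where "u \<in> Aplus A" "v \<in> Aplus A" "x = \<phi> u" "y = \<phi> v" using 1(3) by blast
    then show "g (mF x y) = m (g x) (g y)" using hom by simp
  qed
  moreover have "g ` F = S" unfolding 1(3)[symmetric] h(2)[symmetric] image_image using g by simp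
  ultimately show ?thesis by (rule V_hom_image[OF 1(1) S])
qed

lemma recognizable_iff_saturates:
  assumes A: "A \<noteq> {}"
  shows "recognizable V A L \<longleftrightarrow> L \<subseteq> Aplus A \<and> (\<exists>\<theta>\<in>V_congs V A. saturates \<theta> L)"
proof
  assume r: "recognizable V A L"
  then obtain F m \<phi> where 1: "(F, m) \<in> V" "shom (Aplus A) (@) F m \<phi>" "L = {w \<in> Aplus A. \<phi> w \<in> \<phi> ` L}"
    unfolding recognizable_def by blast
  have "saturates (word_kernel A \<phi>) L"
    unfolding saturates_def word_kernel_def by (subst (1 2) 1(3)) auto
  then show "L \<subseteq> Aplus A \<and> (\<exists>\<theta>\<in>V_congs V A. saturates \<theta> L)"
    using r word_kernel_in_V_congs[OF A 1(1,2)] unfolding recognizable_def by blast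
next
  assume "L \<subseteq> Aplus A \<and> (\<exists>\<theta>\<in>V_congs V A. saturates \<theta> L)"
  then obtain \<theta> where L: "L \<subseteq> Aplus A" and t: "\<theta> \<in> V_congs V A" and sat: "saturates \<theta> L"
    by blast
  obtain F m \<phi> where 1: "(F, m) \<in> V" "shom (Aplus A) (@) F m \<phi>" "\<theta> = word_kernel A \<phi>"
    using t by (rule V_congsE)
  have "L = {w \<in> Aplus A. \<phi> w \<in> \<phi> ` L}"
  proof (intro equalityI subsetI)
    fix w assume "w \<in> {w \<in> Aplus A. \<phi> w \<in> \<phi> ` L}"
    then obtain u where "u \<in> L" "w \<in> Aplus A" "\<phi> u = \<phi> w" by auto
    then show "w \<in> L" using L sat unfolding 1(3) saturates_def word_kernel_def by blast
  qed (use L in auto)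
  then show "recognizable V A L" unfolding recognizable_def using 1 L by blast
qed

lemma recognizable_common_saturating:
  assumes A: "A \<noteq> {}" and K: "recognizable V A K" and L: "recognizable V A L"
  obtains \<theta> where "\<theta> \<in> V_congs V A" "saturates \<theta> K" "saturates \<theta> L"
proof -
  obtain \<theta>K \<theta>L where "\<theta>K \<in> V_congs V A" "saturates \<theta>K K" "\<theta>L \<in> V_congs V A" "saturates \<theta>L L"
    using K L unfolding recognizable_iff_saturates[OF A] by blast
  then show ?thesis using that[OF V_congs_Int] saturates_subset by (meson inf_le1 inf_le2)
qed

lemma recognizable_Aplus: "recognizable V A (Aplus A)"
proof -
  have "shom (Aplus A) (@) {0} (\<lambda>_ _. 0) (\<lambda>_. 0::nat)" unfolding shom_def by simp
  then show ?thesis unfolding recognizable_def using trivial_sgrp_in_V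
    by (intro conjI exI[of _ "{0}"] exI[of _ "\<lambda>_ _. 0"] exI[of _ "\<lambda>_. 0::nat"]) auto
qed

lemma recognizable_Omega_class:
  assumes "x \<in> Omega V A" "\<theta> \<in> V_congs V A"
  shows "recognizable V A (x \<theta>)"
  using assms saturates_Omega_class Omega_subset_Aplus
  unfolding recognizable_iff_saturates[OF V_congs_nonempty_alphabet[OF assms(2)]] by blast

lemma conc_closed_on_empty_alphabet:
  assumes "A = {}"
  shows "conc_closed_on V A"
proof -
  have A: "Aplus A = {}" using assms by (simp add: Aplus_empty_iff)
  have "conc K L = Aplus A" if "recognizable V A K" for K L
    using recognizable_subset_Aplus[OF that] unfolding A conc_def by simp
  then show ?thesis unfolding conc_closed_on_def using recognizable_Aplus by auto
qed

lemma openin_product_Omega_cylinder: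
  assumes A: "A \<noteq> {}" and W: "openin (product_topology (Omega_factor V A) UNIV) W"
    and z: "z \<in> W" "z \<in> Omega V A"
  shows "\<exists>\<theta>\<in>V_congs V A. cylinder V A \<theta> (z \<theta>) \<subseteq> W"
proof -
  obtain B where B: "finite {\<theta>. B \<theta> \<noteq> topspace (Omega_factor V A \<theta>)}"
    "\<And>\<theta>. openin (Omega_factor V A \<theta>) (B \<theta>)" "z \<in> Pi\<^sub>E UNIV B" "Pi\<^sub>E UNIV B \<subseteq> W"
    using W z(1) unfolding openin_product_topology_alt by auto
  define J where "J = {\<theta>. B \<theta> \<noteq> topspace (Omega_factor V A \<theta>)} \<inter> V_congs V A"
  define \<theta> where "\<theta> = (Aplus A \<times> Aplus A) \<inter> \<Inter>J"
  have t: "\<theta> \<in> V_congs V A" unfolding \<theta>_def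
    by (rule V_congs_Int_Inter[OF Aplus_Times_in_V_congs[OF A]]) (use B(1) in \<open>auto simp: J_def\<close>)
  have "x \<in> W" if x: "x \<in> cylinder V A \<theta> (z \<theta>)" for x
  proof -
    have xO: "x \<in> Omega V A" and xz: "x \<theta> = z \<theta>"
      using x cylinder_class_iff[OF _ z(2) t] unfolding cylinder_def by auto
    have "x \<theta>' \<in> B \<theta>'" for \<theta>'
    proof (cases "\<theta>' \<in> J")
      case True
      then have "x \<theta>' = z \<theta>'" using Omega_eq_coarser[OF xO z(2) t _ _ xz] unfolding \<theta>_def J_def by blast
      then show ?thesis using B(3) by auto
    next
      case notJ: False
      show ?thesis
      proof (cases "\<theta>' \<in> V_congs V A")
        case True
        with notJ have "B \<theta>' = Aplus A // \<theta>'" unfolding J_def Omega_factor_def by simp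
        then show ?thesis using Omega_in_quotient[OF xO True] by simp
      next
        case False
        then show ?thesis using PiE_mem[OF B(3) UNIV_I, of \<theta>'] Omega_outside[OF xO] Omega_outside[OF z(2)]
          by simp
      qed
    qed
    then show "x \<in> W" using B(4) by auto
  qed
  then show ?thesis using t by blast
qed

lemma openin_Omega_top_iff:
  assumes A: "A \<noteq> {}"
  shows "openin (Omega_top V A) U \<longleftrightarrow>
    U \<subseteq> Omega V A \<and> (\<forall>z\<in>U. \<exists>\<theta>\<in>V_congs V A. cylinder V A \<theta> (z \<theta>) \<subseteq> U)"
proof
  assume "U \<subseteq> Omega V A \<and> (\<forall>z\<in>U. \<exists>\<theta>\<in>V_congs V A. cylinder V A \<theta> (z \<theta>) \<subseteq> U)"
  moreover have "z \<in> cylinder V A \<theta> (z \<theta>)" if "z \<in> Omega V A" for z \<theta>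
    using that unfolding cylinder_def by simp
  ultimately show "openin (Omega_top V A) U"
    by (subst openin_subopen) (meson openin_cylinder subsetD)
next
  assume "openin (Omega_top V A) U"
  then obtain W where W: "openin (product_topology (Omega_factor V A) UNIV) W" "U = W \<inter> Omega V A"
    unfolding Omega_top_eq openin_subtopology by auto
  moreover have "cylinder V A \<theta> K \<subseteq> Omega V A" for \<theta> K unfolding cylinder_def by auto
  ultimately show "U \<subseteq> Omega V A \<and> (\<forall>z\<in>U. \<exists>\<theta>\<in>V_congs V A. cylinder V A \<theta> (z \<theta>) \<subseteq> U)"
    using openin_product_Omega_cylinder[OF A W(1)] by blast
qed

lemma compact_space_Omega_top: "compact_space (Omega_top V A)"
proof -
  have "compact_space (Omega_factor V A \<theta>)" for \<theta>
    unfolding Omega_factor_def compact_space_discrete_topology by (auto intro: finite_quotient_V_congs)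
  then have "compact_space (product_topology (Omega_factor V A) UNIV)"
    by (simp add: compact_space_product_topology)
  then show ?thesis unfolding Omega_top_eq
    by (intro compact_space_subtopology closedin_compact_space closedin_Omega)
qed

lemma continuous_map_Omega_mult:
  assumes A: "A \<noteq> {}"
  shows "continuous_map (prod_topology (Omega_top V A) (Omega_top V A)) (Omega_top V A)
    (\<lambda>(x, y). Omega_mult V A x y)"
  unfolding continuous_map_def
proof (intro conjI allI impI)
  show "(\<lambda>(x, y). Omega_mult V A x y) \<in> topspace (prod_topology (Omega_top V A) (Omega_top V A)) \<rightarrow>
      topspace (Omega_top V A)"
    using Omega_mult_in_Omega by auto
next
  fix U assume U: "openin (Omega_top V A) U"
  let ?X = "prod_topology (Omega_top V A) (Omega_top V A)"
  show "openin ?X {p \<in> topspace ?X. (case p of (x, y) \<Rightarrow> Omega_mult V A x y) \<in> U}"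
  proof (subst openin_subopen, intro ballI)
    fix p assume p: "p \<in> {p \<in> topspace ?X. (case p of (x, y) \<Rightarrow> Omega_mult V A x y) \<in> U}"
    obtain x y where xy: "p = (x, y)" "x \<in> Omega V A" "y \<in> Omega V A" "Omega_mult V A x y \<in> U"
      using p by auto
    obtain \<theta> where t: "\<theta> \<in> V_congs V A" "cylinder V A \<theta> (Omega_mult V A x y \<theta>) \<subseteq> U"
      using U xy(4) openin_Omega_top_iff[OF A] by blast
    let ?T = "cylinder V A \<theta> (x \<theta>) \<times> cylinder V A \<theta> (y \<theta>)"
    have "openin ?X ?T" by (simp add: openin_prod_Times_iff openin_cylinder[OF t(1)])
    moreover have "p \<in> ?T" using xy unfolding cylinder_def by simp
    moreover have "?T \<subseteq> {p \<in> topspace ?X. (case p of (x, y) \<Rightarrow> Omega_mult V A x y) \<in> U}"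
    proof
      fix q assume q: "q \<in> ?T"
      then have "(case q of (x, y) \<Rightarrow> Omega_mult V A x y) \<in> U"
        using Omega_mult_image_class_cylinders_subset[OF xy(2,3) t(1)] t(2) by blast
      moreover have "q \<in> topspace ?X" using q unfolding cylinder_def by auto
      ultimately show "q \<in> {p \<in> topspace ?X. (case p of (x, y) \<Rightarrow> Omega_mult V A x y) \<in> U}" by simp
    qed
    ultimately show "\<exists>T. openin ?X T \<and> p \<in> T \<and> T \<subseteq> {p \<in> topspace ?X. (case p of (x, y) \<Rightarrow> Omega_mult V A x y) \<in> U}"
      by blast
  qed
qed

lemma compactin_Omega_mult_image_cylinders:
  assumes t: "\<theta> \<in> V_congs V A"
  shows "compactin (Omega_top V A) ((\<lambda>(x, y). Omega_mult V A x y) ` (cylinder V A \<theta> K \<times> cylinder V A \<theta> L))"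
proof (rule image_compactin[OF _ continuous_map_Omega_mult[OF V_congs_nonempty_alphabet[OF t]]])
  show "compactin (prod_topology (Omega_top V A) (Omega_top V A)) (cylinder V A \<theta> K \<times> cylinder V A \<theta> L)"
    using compact_space_Omega_top closedin_cylinder[OF t]
    by (intro closedin_compact_space) (auto simp: compact_space_prod_topology closedin_prod_Times_iff)
qed

lemma closedin_Omega_top_memI:
  assumes C: "closedin (Omega_top V A) C" and z: "z \<in> Omega V A" and t0: "\<theta>0 \<in> V_congs V A"
    and approx: "\<And>\<theta>. \<theta> \<in> V_congs V A \<Longrightarrow> \<theta> \<subseteq> \<theta>0 \<Longrightarrow> \<exists>w\<in>z \<theta>. Omega_word V A w \<in> C"
  shows "z \<in> C"
proof (rule ccontr)
  assume "z \<notin> C"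
  moreover have "openin (Omega_top V A) (Omega V A - C)" using C unfolding closedin_def by simp
  ultimately obtain \<theta>1 where t1: "\<theta>1 \<in> V_congs V A" "cylinder V A \<theta>1 (z \<theta>1) \<subseteq> Omega V A - C"
    using z openin_Omega_top_iff[OF V_congs_nonempty_alphabet[OF t0]] by blast
  have t: "\<theta>1 \<inter> \<theta>0 \<in> V_congs V A" by (rule V_congs_Int[OF t1(1) t0])
  then obtain w where w: "w \<in> z (\<theta>1 \<inter> \<theta>0)" "Omega_word V A w \<in> C" using approx by blast
  have "w \<in> Aplus A" using w(1) Omega_subset_Aplus[OF z t] by blast
  moreover have "Omega_word V A w \<theta>1 = z \<theta>1"
    using Omega_eq_Image_coarser[OF z t t1(1) _ w(1)] Omega_word_apply[OF t1(1)] by simp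
  ultimately have "Omega_word V A w \<in> cylinder V A \<theta>1 (z \<theta>1)"
    unfolding cylinder_def using Omega_word_in_Omega by simp
  then show False using t1(2) w(2) by blast
qed

lemma compact_openin_Omega_top_cylinders:
  assumes A: "A \<noteq> {}" and o: "openin (Omega_top V A) P" and k: "compactin (Omega_top V A) P"
  obtains \<theta> where "\<theta> \<in> V_congs V A" "\<And>z. z \<in> P \<Longrightarrow> cylinder V A \<theta> (z \<theta>) \<subseteq> P"
proof -
  have PO: "P \<subseteq> Omega V A" and "\<forall>z\<in>P. \<exists>\<theta>\<in>V_congs V A. cylinder V A \<theta> (z \<theta>) \<subseteq> P"
    using o openin_Omega_top_iff[OF A] by blast+
  then obtain nb where nb: "\<And>z. z \<in> P \<Longrightarrow> nb z \<in> V_congs V A \<and> cylinder V A (nb z) (z (nb z)) \<subseteq> P"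
    by metis
  let ?cyl = "\<lambda>z. cylinder V A (nb z) (z (nb z))"
  have "P \<subseteq> \<Union>(?cyl ` P)" using PO unfolding cylinder_def by auto
  moreover have "\<forall>B\<in>?cyl ` P. openin (Omega_top V A) B" using nb openin_cylinder by blast
  ultimately obtain F where F: "finite F" "F \<subseteq> ?cyl ` P" "P \<subseteq> \<Union>F"
    using k unfolding compactin_def by meson
  then obtain Z where Z: "Z \<subseteq> P" "finite Z" "F = ?cyl ` Z" by (meson finite_subset_image)
  define \<theta> where "\<theta> = (Aplus A \<times> Aplus A) \<inter> \<Inter>(nb ` Z)"
  have t: "\<theta> \<in> V_congs V A" unfolding \<theta>_def
    using Z nb by (intro V_congs_Int_Inter Aplus_Times_in_V_congs[OF A]) auto
  have "cylinder V A \<theta> (y \<theta>) \<subseteq> P" if y: "y \<in> P" for y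
  proof
    fix x assume x: "x \<in> cylinder V A \<theta> (y \<theta>)"
    obtain z where z: "z \<in> Z" "y \<in> ?cyl z" using y F(3) Z(3) by auto
    have xO: "x \<in> Omega V A" and yO: "y \<in> Omega V A" and zO: "z \<in> Omega V A"
      using x y z(1) Z(1) PO unfolding cylinder_def by auto
    have tz: "nb z \<in> V_congs V A" "\<theta> \<subseteq> nb z" using nb z(1) Z(1) unfolding \<theta>_def by auto
    have "x \<theta> = y \<theta>" using x cylinder_class_iff[OF xO yO t] by simp
    then have "x (nb z) = y (nb z)" by (rule Omega_eq_coarser[OF xO yO t tz])
    also have "\<dots> = z (nb z)" using z(2) cylinder_class_iff[OF yO zO tz(1)] by simp
    finally have "x \<in> ?cyl z" using cylinder_class_iff[OF xO zO tz(1)] by simp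
    then show "x \<in> P" using nb z(1) Z(1) by blast
  qed
  then show ?thesis using t that by blast
qed

lemma openin_prod_Omega_top_cylinders:
  assumes A: "A \<noteq> {}" and U: "openin (prod_topology (Omega_top V A) (Omega_top V A)) U" and xy: "(x, y) \<in> U"
  obtains \<theta> where "\<theta> \<in> V_congs V A" "cylinder V A \<theta> (x \<theta>) \<times> cylinder V A \<theta> (y \<theta>) \<subseteq> U"
proof -
  from U[unfolded openin_prod_topology_alt, rule_format, OF xy]
  obtain U1 U2 where U12: "openin (Omega_top V A) U1" "openin (Omega_top V A) U2" "x \<in> U1" "y \<in> U2"
    "U1 \<times> U2 \<subseteq> U"
    by blast
  obtain \<theta>1 where t1: "\<theta>1 \<in> V_congs V A" "cylinder V A \<theta>1 (x \<theta>1) \<subseteq> U1"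
    using U12(1,3) openin_Omega_top_iff[OF A] by blast
  obtain \<theta>2 where t2: "\<theta>2 \<in> V_congs V A" "cylinder V A \<theta>2 (y \<theta>2) \<subseteq> U2"
    using U12(2,4) openin_Omega_top_iff[OF A] by blast
  have t: "\<theta>1 \<inter> \<theta>2 \<in> V_congs V A" by (rule V_congs_Int[OF t1(1) t2(1)])
  have xO: "x \<in> Omega V A" and yO: "y \<in> Omega V A"
    using openin_subset[OF U12(1)] openin_subset[OF U12(2)] U12(3,4) by auto
  have "cylinder V A (\<theta>1 \<inter> \<theta>2) (x (\<theta>1 \<inter> \<theta>2)) \<subseteq> U1"
    using cylinder_class_mono[OF xO t t1(1)] t1(2) by blast
  moreover have "cylinder V A (\<theta>1 \<inter> \<theta>2) (y (\<theta>1 \<inter> \<theta>2)) \<subseteq> U2"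
    using cylinder_class_mono[OF yO t t2(1)] t2(2) by blast
  ultimately show ?thesis using that[OF t] U12(5) by blast
qed

section \<open>From finite to arbitrary alphabets\<close>

lemma finite_letter_retraction:
  assumes t: "\<theta> \<in> V_congs V A"
  obtains \<pi> where "\<And>a. a \<in> A \<Longrightarrow> \<pi> a \<in> A" "finite (\<pi> ` A)" "\<And>w. w \<in> Aplus A \<Longrightarrow> (map \<pi> w, w) \<in> \<theta>"
proof -
  obtain F m \<phi> where 1: "(F, m) \<in> V" "shom (Aplus A) (@) F m \<phi>" "\<theta> = word_kernel A \<phi>"
    using t by (rule V_congsE) blast
  define \<pi> where "\<pi> a = (SOME a'. a' \<in> A \<and> \<phi> [a'] = \<phi> [a])" for a
  have \<pi>: "\<pi> a \<in> A \<and> \<phi> [\<pi> a] = \<phi> [a]" if "a \<in> A" for a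
    unfolding \<pi>_def by (rule someI_ex) (use that in blast)
  have "\<pi> ` A \<subseteq> (\<lambda>f. SOME a'. a' \<in> A \<and> \<phi> [a'] = f) ` F"
    using 1(2) unfolding \<pi>_def shom_def Aplus_def by auto
  then have "finite (\<pi> ` A)"
    using V_finite_sgrp[OF 1(1)] unfolding finite_sgrp_def by (meson finite_imageI finite_subset)
  moreover have "(map \<pi> w, w) \<in> \<theta>" if "w \<in> Aplus A" for w
    using shom_map_letters[OF 1(2) _ _ that] \<pi> that unfolding 1(3) word_kernel_def Aplus_def by auto
  ultimately show ?thesis using that \<pi> by blast
qed

lemma conc_closed_on_if_finite_alphabets:
  assumes cc: "\<And>B :: 'a set. finite B \<Longrightarrow> conc_closed_on V B"
  shows "conc_closed_on V (A :: 'a set)"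
proof (cases "A = {}")
  case True
  then show ?thesis by (rule conc_closed_on_empty_alphabet)
next
  case A: False
  show ?thesis
    unfolding conc_closed_on_def
  proof (intro allI impI)
    fix K L assume KL: "recognizable V A K \<and> recognizable V A L"
    then obtain \<theta> where t: "\<theta> \<in> V_congs V A" and sat: "saturates \<theta> K" "saturates \<theta> L"
      using recognizable_common_saturating[OF A] by blast
    obtain \<pi> where \<pi>: "\<And>a. a \<in> A \<Longrightarrow> \<pi> a \<in> A" "finite (\<pi> ` A)"
      "\<And>w. w \<in> Aplus A \<Longrightarrow> (map \<pi> w, w) \<in> \<theta>"
      using finite_letter_retraction[OF t] by blast
    define B where "B = \<pi> ` A"
    have mapB: "map \<pi> w \<in> Aplus B" if "w \<in> Aplus A" for w using that unfolding Aplus_def B_def by auto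
    have "B \<subseteq> A" using \<pi>(1) unfolding B_def by auto
    then have "recognizable V B (K \<inter> Aplus B)" "recognizable V B (L \<inter> Aplus B)"
      using recognizable_restrict KL by blast+
    moreover have "finite B" using \<pi>(2) unfolding B_def .
    ultimately have "recognizable V B (conc (K \<inter> Aplus B) (L \<inter> Aplus B))"
      using cc unfolding conc_closed_on_def by blast
    then have "recognizable V A {w \<in> Aplus A. map \<pi> w \<in> conc (K \<inter> Aplus B) (L \<inter> Aplus B)}"
      by (rule recognizable_vimage[OF _ mapB]) auto
    moreover have "{w \<in> Aplus A. map \<pi> w \<in> conc (K \<inter> Aplus B) (L \<inter> Aplus B)} = conc K L"
    proof (rule conc_vimage_map)
      show "\<And>a. a \<in> A \<Longrightarrow> \<pi> a \<in> B" unfolding B_def by simp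
      show "K \<subseteq> Aplus A" "L \<subseteq> Aplus A" using KL recognizable_subset_Aplus by blast+
      show "map \<pi> w \<in> K \<longleftrightarrow> w \<in> K" "map \<pi> w \<in> L \<longleftrightarrow> w \<in> L" if "w \<in> Aplus A" for w
        using saturates_mem_iff[OF V_congs_equiv[OF t] sat(1)] saturates_mem_iff[OF V_congs_equiv[OF t] sat(2)]
          \<pi>(3)[OF that] by blast+
    qed
    ultimately show "recognizable V A (conc K L)" by simp
  qed
qed

section \<open>Concatenation closure forces nilpotent semigroups into V\<close>

lemma recognizable_letter:
  assumes cc: "conc_closed_on V {a}" and a: "a \<in> A"
  shows "recognizable V A {[a]}"
proof -
  have "recognizable V {a} (conc (Aplus {a}) (Aplus {a}))"
    using cc recognizable_Aplus unfolding conc_closed_on_def by blast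
  then have r: "recognizable V {a} {[a]}" using recognizable_Diff conc_one_letter by metis
  \<comment> \<open>a morphism onto \<open>{a}\<^sup>+\<close> under which only \<open>[a]\<close> has image \<open>[a]\<close>\<close>
  define \<sigma> where "\<sigma> w = concat (map (\<lambda>b. if b = a then [a] else [a, a]) w)" for w
  have \<sigma>_length: "length w \<le> length (\<sigma> w)" for w unfolding \<sigma>_def by (induction w) auto
  have "\<sigma> w \<in> Aplus {a}" if "w \<in> Aplus A" for w
  proof -
    have "\<sigma> w \<noteq> []" using that \<sigma>_length[of w] unfolding Aplus_def by auto
    moreover have "set (\<sigma> w) \<subseteq> {a}" unfolding \<sigma>_def by auto
    ultimately show ?thesis unfolding Aplus_def by simp
  qed
  then have "recognizable V A {w \<in> Aplus A. \<sigma> w \<in> {[a]}}"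
    by (intro recognizable_vimage[OF r]) (simp_all add: \<sigma>_def)
  moreover have "{w \<in> Aplus A. \<sigma> w \<in> {[a]}} = {[a]}"
  proof (intro equalityI subsetI)
    fix w assume w: "w \<in> {w \<in> Aplus A. \<sigma> w \<in> {[a]}}"
    then obtain b where "w = [b]" using \<sigma>_length[of w] unfolding Aplus_def by (cases w) auto
    then show "w \<in> {[a]}" using w unfolding \<sigma>_def by (auto split: if_splits)
  next
    fix w assume "w \<in> {[a]}"
    then show "w \<in> {w \<in> Aplus A. \<sigma> w \<in> {[a]}}" using a unfolding \<sigma>_def Aplus_def by simp
  qed
  ultimately show ?thesis by simp
qed

lemma recognizable_singleton_if_conc_closed:
  assumes cc: "conc_closed_on V A" and letters: "\<And>a. a \<in> A \<Longrightarrow> conc_closed_on V {a}"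
    and w: "w \<in> Aplus A"
  shows "recognizable V A {w}"
  using w
proof (induction w)
  case (Cons a w)
  have aA: "a \<in> A" using Cons.prems by (simp add: Aplus_def)
  have a: "recognizable V A {[a]}" by (rule recognizable_letter[OF letters[OF aA] aA])
  show ?case
  proof (cases "w = []")
    case False
    then have "recognizable V A {w}" using Cons unfolding Aplus_def by simp
    then have "recognizable V A (conc {[a]} {w})" using cc a unfolding conc_closed_on_def by blast
    moreover have "conc {[a]} {w} = {a # w}" unfolding conc_def by simp
    ultimately show ?thesis by simp
  qed (use a in simp)
qed (simp add: Aplus_def)

lemma quotient_identifying_long_words_in_V:
  assumes A: "finite A" "A \<noteq> {}" and S: "finite_sgrp S m"
    and h: "shom (Aplus A) (@) S m \<psi>" "\<psi> ` Aplus A = S"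
    and long: "\<And>w. w \<in> Aplus A \<Longrightarrow> length w \<ge> k \<Longrightarrow> \<psi> w = z"
    and short: "\<And>w. w \<in> Aplus A \<Longrightarrow> length w < k \<Longrightarrow> recognizable V A {w}"
  shows "(S, m) \<in> V"
proof -
  define W where "W = {w \<in> Aplus A. length w < k}"
  have "finite W"
    using finite_lists_length_le[OF A(1), of k] unfolding W_def Aplus_def by (rule rev_finite_subset) auto
  moreover have "\<exists>\<theta>\<in>V_congs V A. saturates \<theta> {w}" if "w \<in> W" for w
    using short that unfolding W_def recognizable_iff_saturates[OF A(2)] by blast
  ultimately obtain \<theta> where t: "\<theta> \<in> V_congs V A" and sep: "\<forall>w\<in>W. saturates \<theta> {w}"
    using V_congs_saturating_finite[OF A(2)] by blast
  have "\<psi> u = \<psi> v" if uv: "(u, v) \<in> \<theta>" for u v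
  proof -
    have uvA: "u \<in> Aplus A" "v \<in> Aplus A" using uv V_congs_subset[OF t] by auto
    have vu: "(v, u) \<in> \<theta>" using uv V_congs_equiv[OF t] unfolding equiv_def sym_def by blast
    consider "u \<in> W" | "v \<in> W" | "u \<notin> W" "v \<notin> W" by blast
    then show ?thesis
    proof cases
      case 1
      then show ?thesis using sep uv unfolding saturates_def by blast
    next
      case 2
      then show ?thesis using sep vu unfolding saturates_def by blast
    next
      case 3
      then show ?thesis using long uvA unfolding W_def by simp
    qed
  qed
  then show ?thesis by (rule V_congs_hom_image_in_V[OF t S h])
qed

lemma contains_N_if_conc_closed:
  assumes inf: "infinite (UNIV :: 'a set)" and cc: "\<And>A :: 'a set. finite A \<Longrightarrow> conc_closed_on V A"
  shows "contains_N V"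
  unfolding contains_N_def
proof (intro allI impI, elim conjE)
  fix S :: "nat set" and m :: "nat \<Rightarrow> nat \<Rightarrow> nat"
  assume fS: "finite_sgrp S m" and nil: "nilpotent_sgrp S m"
  then have finS: "finite S" and sg: "sgrp S m" unfolding finite_sgrp_def by auto
  obtain z k where z: "k \<ge> 1" "\<And>xs. length xs = k \<Longrightarrow> set xs \<subseteq> S \<Longrightarrow> foldl m (hd xs) (tl xs) = z"
    using nil unfolding nilpotent_sgrp_def by blast
  obtain A :: "'a set" where A: "finite A" "card A = card S" using infinite_arbitrarily_large[OF inf] by blast
  obtain g where "bij_betw g A S" using finite_same_card_bij[OF A(1) finS A(2)] by blast
  then have gA: "g ` A = S" by (simp add: bij_betw_def)
  have "A \<noteq> {}" using sg gA unfolding sgrp_def by auto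
  moreover have "shom (Aplus A) (@) S m (free_ext m g)" using shom_free_ext[OF sg, of g A] gA by simp
  moreover have "free_ext m g w = z" if "w \<in> Aplus A" "length w \<ge> k" for w
    using nilpotent_foldl_long[OF sg z(2) z(1), of "map g w"] that gA
    unfolding free_ext_def Aplus_def by (cases w) auto
  moreover have "recognizable V A {w}" if "w \<in> Aplus A" for w
    using that cc by (intro recognizable_singleton_if_conc_closed[OF cc[OF A(1)]]) auto
  ultimately show "(S, m) \<in> V"
    using quotient_identifying_long_words_in_V[OF A(1) _ fS _ free_ext_image[OF sg gA]] by blast
qed

section \<open>Concatenation closure and open multiplication\<close>

lemma Omega_mult_image_cylinders:
  assumes t: "\<theta> \<in> V_congs V A" and t': "\<theta>' \<in> V_congs V A" "\<theta>' \<subseteq> \<theta>"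
    and K: "K \<subseteq> Aplus A" "saturates \<theta> K" and L: "L \<subseteq> Aplus A" "saturates \<theta> L"
    and KL: "saturates \<theta>' (conc K L)"
  shows "(\<lambda>(x, y). Omega_mult V A x y) ` (cylinder V A \<theta> K \<times> cylinder V A \<theta> L) = cylinder V A \<theta>' (conc K L)"
    (is "?Q = _")
proof
  show "?Q \<subseteq> cylinder V A \<theta>' (conc K L)"
  proof clarify
    fix x y assume x: "x \<in> cylinder V A \<theta> K" and y: "y \<in> cylinder V A \<theta> L"
    then obtain u v where uv: "u \<in> K" "v \<in> L" "Omega_mult V A x y \<theta>' = \<theta>' `` {u @ v}"
      using t t' by (rule Omega_mult_cylinders_apply)
    then have "Omega_mult V A x y \<theta>' \<subseteq> conc K L" using KL unfolding saturates_def conc_def by blast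
    moreover have "x \<in> Omega V A" "y \<in> Omega V A" using x y unfolding cylinder_def by auto
    ultimately show "Omega_mult V A x y \<in> cylinder V A \<theta>' (conc K L)"
      using Omega_mult_in_Omega unfolding cylinder_def by simp
  qed
next
  have closed: "closedin (Omega_top V A) ?Q"
    by (rule compactin_imp_closedin[OF Hausdorff_space_Omega_top compactin_Omega_mult_image_cylinders[OF t]])
  show "cylinder V A \<theta>' (conc K L) \<subseteq> ?Q"
  proof
    fix z assume z: "z \<in> cylinder V A \<theta>' (conc K L)"
    then have zO: "z \<in> Omega V A" unfolding cylinder_def by simp
    show "z \<in> ?Q"
    proof (rule closedin_Omega_top_memI[OF closed zO t'(1)])
      fix \<theta>'' assume t'': "\<theta>'' \<in> V_congs V A" "\<theta>'' \<subseteq> \<theta>'"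
      obtain w where w: "w \<in> z \<theta>''" using Omega_nonempty[OF zO t''(1)] by blast
      then have "w \<in> conc K L" using Omega_mono[OF zO t''(1) t'(1) t''(2)] z unfolding cylinder_def by blast
      then obtain u v where "w = u @ v" "u \<in> K" "v \<in> L" unfolding conc_def by blast
      then have "Omega_word V A w \<in> ?Q"
        using Omega_word_append_in_mult_image[OF t K(2) L(2)] K(1) L(1) by blast
      then show "\<exists>w\<in>z \<theta>''. Omega_word V A w \<in> ?Q" using w by blast
    qed
  qed
qed

lemma mult_open_empty_alphabet:
  assumes "A = {}"
  shows "mult_open V A"
proof -
  have C: "V_congs V A = {}" using V_congs_nonempty_alphabet assms by blast
  then have O: "Omega V A = {\<lambda>_. {}}" unfolding Omega_def by auto
  have "Omega_mult V A x y = (\<lambda>_. {})" for x y unfolding Omega_mult_def using C by simp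
  then have "(\<lambda>(x, y). Omega_mult V A x y) ` U = {} \<or>
      (\<lambda>(x, y). Omega_mult V A x y) ` U = topspace (Omega_top V A)" for U
    using O by auto
  then show ?thesis unfolding mult_open_def by (metis openin_empty openin_topspace)
qed

lemma openin_Omega_mult_image_class_cylinders:
  assumes cc: "conc_closed_on V A" and x: "x \<in> Omega V A" and y: "y \<in> Omega V A" and t: "\<theta> \<in> V_congs V A"
  shows "openin (Omega_top V A) ((\<lambda>(x, y). Omega_mult V A x y) ` (cylinder V A \<theta> (x \<theta>) \<times> cylinder V A \<theta> (y \<theta>)))"
proof -
  have "recognizable V A (conc (x \<theta>) (y \<theta>))"
    using cc recognizable_Omega_class[OF x t] recognizable_Omega_class[OF y t] unfolding conc_closed_on_def by blast
  then obtain \<theta>3 where t3: "\<theta>3 \<in> V_congs V A" "saturates \<theta>3 (conc (x \<theta>) (y \<theta>))"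
    using recognizable_iff_saturates[OF V_congs_nonempty_alphabet[OF t]] by blast
  have t': "\<theta> \<inter> \<theta>3 \<in> V_congs V A" by (rule V_congs_Int[OF t t3(1)])
  have "(\<lambda>(x, y). Omega_mult V A x y) ` (cylinder V A \<theta> (x \<theta>) \<times> cylinder V A \<theta> (y \<theta>)) =
      cylinder V A (\<theta> \<inter> \<theta>3) (conc (x \<theta>) (y \<theta>))"
    by (rule Omega_mult_image_cylinders[OF t t'])
      (use t3(2) Omega_subset_Aplus[OF x t] Omega_subset_Aplus[OF y t] saturates_Omega_class[OF x t]
        saturates_Omega_class[OF y t] in \<open>auto intro: saturates_subset\<close>)
  then show ?thesis using openin_cylinder[OF t'] by simp
qed

lemma mult_open_if_conc_closed:
  assumes cc: "conc_closed_on V A"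
  shows "mult_open V A"
proof (cases "A = {}")
  case True
  then show ?thesis by (rule mult_open_empty_alphabet)
next
  case A: False
  let ?m = "\<lambda>(x, y). Omega_mult V A x y"
  show ?thesis
    unfolding mult_open_def
  proof (intro allI impI)
    fix U assume U: "openin (prod_topology (Omega_top V A) (Omega_top V A)) U"
    have "\<exists>W. openin (Omega_top V A) W \<and> z \<in> W \<and> W \<subseteq> ?m ` U" if z: "z \<in> ?m ` U" for z
    proof -
      obtain x y where xy: "(x, y) \<in> U" "z = Omega_mult V A x y" using z by auto
      obtain \<theta> where t: "\<theta> \<in> V_congs V A"
        and sub: "cylinder V A \<theta> (x \<theta>) \<times> cylinder V A \<theta> (y \<theta>) \<subseteq> U"
        using A U xy(1) by (rule openin_prod_Omega_top_cylinders)
      have xO: "x \<in> Omega V A" and yO: "y \<in> Omega V A"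
        using U xy(1) openin_subset by fastforce+
      have "(x, y) \<in> cylinder V A \<theta> (x \<theta>) \<times> cylinder V A \<theta> (y \<theta>)"
        using xO yO unfolding cylinder_def by simp
      then have "z \<in> ?m ` (cylinder V A \<theta> (x \<theta>) \<times> cylinder V A \<theta> (y \<theta>))"
        unfolding xy(2) by (rule rev_image_eqI) simp
      moreover have "?m ` (cylinder V A \<theta> (x \<theta>) \<times> cylinder V A \<theta> (y \<theta>)) \<subseteq> ?m ` U"
        using sub by (rule image_mono)
      ultimately show ?thesis using openin_Omega_mult_image_class_cylinders[OF cc xO yO t] by blast
    qed
    then show "openin (Omega_top V A) (?m ` U)" by (subst openin_subopen) blast
  qed
qed

lemma recognizable_singleton_if_contains_N:
  assumes N: "contains_N V" and fin: "finite A" and w: "w \<in> Aplus A"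
  shows "recognizable V A {w}"
proof -
  define n where "n = length w"
  define \<phi> where "\<phi> u = (if length u \<le> n then Some u else None)" for u :: "'a list"
  obtain T :: "nat set" and tm e where T: "finite_sgrp T tm" "bij_betw e (trunc_sgrp A n) T"
    "shom (trunc_sgrp A n) (trunc_mult n) T tm e"
    using finite_sgrp_nat_copy[OF finite_sgrp_trunc[OF fin]] .
  have "nilpotent_sgrp T tm"
    using nilpotent_sgrp_image[OF sgrp_trunc nilpotent_sgrp_trunc T(3)] T(2) unfolding bij_betw_def by blast
  then have TV: "(T, tm) \<in> V" using N T(1) unfolding contains_N_def by blast
  have hom: "shom (Aplus A) (@) (trunc_sgrp A n) (trunc_mult n) \<phi>"
    unfolding shom_def \<phi>_def trunc_sgrp_def trunc_mult_def by (auto simp: Aplus_append)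
  have A: "A \<noteq> {}" using w unfolding Aplus_def by auto
  have "word_kernel A \<phi> \<in> V_congs V A"
    by (rule word_kernel_in_V_congs_embedding[OF A TV T(3) bij_betw_imp_inj_on[OF T(2)] hom])
  moreover have "saturates (word_kernel A \<phi>) {w}"
    unfolding saturates_def word_kernel_def \<phi>_def n_def by (auto split: if_splits)
  ultimately show ?thesis using w unfolding recognizable_iff_saturates[OF A] by blast
qed

lemma Omega_word_in_mult_image_iff:
  assumes t: "\<theta> \<in> V_congs V A" and K: "K \<subseteq> Aplus A" "saturates \<theta> K" and L: "L \<subseteq> Aplus A" "saturates \<theta> L"
    and w: "w \<in> Aplus A" and single: "recognizable V A {w}"
  shows "Omega_word V A w \<in> (\<lambda>(x, y). Omega_mult V A x y) ` (cylinder V A \<theta> K \<times> cylinder V A \<theta> L) \<longleftrightarrow>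
    w \<in> conc K L"
proof
  assume "Omega_word V A w \<in> (\<lambda>(x, y). Omega_mult V A x y) ` (cylinder V A \<theta> K \<times> cylinder V A \<theta> L)"
  then obtain x y where xy: "x \<in> cylinder V A \<theta> K" "y \<in> cylinder V A \<theta> L"
    "Omega_word V A w = Omega_mult V A x y"
    by auto
  obtain \<theta>w where tw: "\<theta>w \<in> V_congs V A" "saturates \<theta>w {w}"
    using single recognizable_iff_saturates[OF V_congs_nonempty_alphabet[OF t]] by blast
  have t': "\<theta> \<inter> \<theta>w \<in> V_congs V A" by (rule V_congs_Int[OF t tw(1)])
  obtain u v where uv: "u \<in> K" "v \<in> L" "Omega_mult V A x y (\<theta> \<inter> \<theta>w) = (\<theta> \<inter> \<theta>w) `` {u @ v}"
    using xy(1,2) t t' by (rule Omega_mult_cylinders_apply) auto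
  have "w \<in> (\<theta> \<inter> \<theta>w) `` {u @ v}" using Omega_word_self[OF t' w] xy(3) uv(3) by simp
  then have "(w, u @ v) \<in> \<theta>w" using V_congs_equiv[OF tw(1)] unfolding equiv_def sym_def by blast
  then have "w = u @ v" using tw(2) unfolding saturates_def by blast
  then show "w \<in> conc K L" using uv(1,2) unfolding conc_def by blast
next
  assume "w \<in> conc K L"
  then obtain u v where "w = u @ v" "u \<in> K" "v \<in> L" unfolding conc_def by blast
  then show "Omega_word V A w \<in> (\<lambda>(x, y). Omega_mult V A x y) ` (cylinder V A \<theta> K \<times> cylinder V A \<theta> L)"
    using Omega_word_append_in_mult_image[OF t K(2) L(2)] K(1) L(1) by blast
qed

lemma conc_closed_on_if_mult_open:
  assumes N: "contains_N V" and fin: "finite A" and mo: "mult_open V A"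
  shows "conc_closed_on V A"
proof (cases "A = {}")
  case True
  then show ?thesis by (rule conc_closed_on_empty_alphabet)
next
  case A: False
  show ?thesis
    unfolding conc_closed_on_def
  proof (intro allI impI)
    fix K L assume KL: "recognizable V A K \<and> recognizable V A L"
    then obtain \<theta> where t: "\<theta> \<in> V_congs V A" and satK: "saturates \<theta> K" and satL: "saturates \<theta> L"
      using recognizable_common_saturating[OF A] by blast
    have K: "K \<subseteq> Aplus A" and L: "L \<subseteq> Aplus A" using KL recognizable_subset_Aplus by blast+
    define P where "P = (\<lambda>(x, y). Omega_mult V A x y) ` (cylinder V A \<theta> K \<times> cylinder V A \<theta> L)"
    have "openin (Omega_top V A) P"
      using mo openin_cylinder[OF t] unfolding mult_open_def P_def by (simp add: openin_prod_Times_iff)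
    moreover have "compactin (Omega_top V A) P"
      unfolding P_def by (rule compactin_Omega_mult_image_cylinders[OF t])
    ultimately obtain \<theta>s where ts: "\<theta>s \<in> V_congs V A" "\<And>z. z \<in> P \<Longrightarrow> cylinder V A \<theta>s (z \<theta>s) \<subseteq> P"
      by (rule compact_openin_Omega_top_cylinders[OF A]) blast
    have "saturates \<theta>s (conc K L)"
    proof (rule saturates_of_Omega_word_preimage[OF ts(1)])
      show "\<And>z. z \<in> P \<Longrightarrow> cylinder V A \<theta>s (z \<theta>s) \<subseteq> P" by (rule ts(2))
    next
      fix w assume w: "w \<in> Aplus A"
      show "Omega_word V A w \<in> P \<longleftrightarrow> w \<in> conc K L"
        unfolding P_def
        by (rule Omega_word_in_mult_image_iff[OF t K satK L satL w
              recognizable_singleton_if_contains_N[OF N fin w]])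
    qed
    then show "recognizable V A (conc K L)"
      unfolding recognizable_iff_saturates[OF A] using ts(1) conc_subset_Aplus[OF K L] by blast
  qed
qed

end

theorem mainTheorem3:
  fixes V :: "(nat set \<times> (nat \<Rightarrow> nat \<Rightarrow> nat)) set"
  assumes "pseudovariety V"
    and "infinite (UNIV :: 'a set)"
  shows "((\<forall>A::'a set. finite A \<longrightarrow> conc_closed_on V A) \<longleftrightarrow> (\<forall>A::'a set. conc_closed_on V A))
       \<and> ((\<forall>A::'a set. conc_closed_on V A) \<longleftrightarrow> (contains_N V \<and> (\<forall>A::'a set. mult_open V A)))
       \<and> ((contains_N V \<and> (\<forall>A::'a set. mult_open V A)) \<longleftrightarrow>
            (contains_N V \<and> (\<forall>A::'a set. finite A \<longrightarrow> mult_open V A)))"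
proof -
  interpret semigroup_pseudovariety V by (rule semigroup_pseudovariety.intro) (rule assms(1))
  have "(\<forall>A::'a set. finite A \<longrightarrow> conc_closed_on V A) \<longrightarrow> (\<forall>A::'a set. conc_closed_on V A)"
    using conc_closed_on_if_finite_alphabets by blast
  moreover have "(\<forall>A::'a set. finite A \<longrightarrow> conc_closed_on V A) \<longrightarrow> contains_N V"
    using contains_N_if_conc_closed[OF assms(2)] by blast
  moreover have "(\<forall>A::'a set. conc_closed_on V A) \<longrightarrow> (\<forall>A::'a set. mult_open V A)"
    using mult_open_if_conc_closed by blast
  moreover have "contains_N V \<and> (\<forall>A::'a set. finite A \<longrightarrow> mult_open V A) \<longrightarrow>
      (\<forall>A::'a set. finite A \<longrightarrow> conc_closed_on V A)"
    using conc_closed_on_if_mult_open by blast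
  ultimately show ?thesis by blast
qed

end
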